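(* Let $n\geqslant 4$ be an integer and let $\alpha,\beta$ be real with $\alpha>-1$ and $n+\alpha+\beta>0$. Then the zeros of $\phi_n^{(\alpha,\beta)}$ and $\phi_{n-1}^{(\alpha,\beta)}$ are all negative and interlace non-strictly if and only if $\phi_n^{(\alpha,\beta-1)}$ has only real zeros; and they are all negative and interlace strictly if and only if $\phi_n^{(\alpha,\beta-1)}$ has only simple real zeros. Moreover, if $\phi_n^{(\alpha,\beta-1)}$ has only real zeros, then $\mathbf{zr}_1\big(\phi_{n-1}^{(\alpha,\beta)}\big)\leqslant\mathbf{zr}_1\big(\phi_{n}^{(\alpha,\beta)}\big)$.
   Context: For real $a$ and integer $m\geqslant0$, $(a)_m=a(a+1)\cdots(a+m-1)$, $(a)_0=1$. For real $\alpha,\beta$ with $\alpha>-1$, the Jacobi polynomial is $$P_n^{(\alpha,\beta)}(x)=\frac{(\alpha+1)_n}{n!}\sum_{k=0}^{n}\frac{(-n)_k(n+\alpha+\beta+1)_k}{k!\,(\alpha+1)_k}\Big(\frac{1-x}{2}\Big)^k ,$$ and $$\phi_n^{(\alpha,\beta)}(\mu)=\sum_{k=0}^{[n/2]}\Big(\tfrac{d^{2k}}{dx^{2k}}P_n^{(\alpha,\beta)}(x)\Big)\Big|_{x=1}\mu^k=\frac{(\alpha+1)_n}{n!}\sum_{k=0}^{[n/2]}\frac{(-n)_{2k}(n+\alpha+\beta+1)_{2k}}{(\alpha+1)_{2k}}\Big(\frac{\mu}{4}\Big)^k .$$ Two real polynomials $g,h$ interlace strictly if all their zeros are real, simple and mutually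 distinct, and between any two consecutive zeros of either polynomial there is exactly one zero of the other. They interlace non-strictly if all their zeros are real and $g/\gcd(g,h)$, $h/\gcd(g,h)$ interlace strictly. For a polynomial $p$ with real zeros, $\mathbf{zr}_i(p)$ denotes its $i$-th zero counted in order of increasing distance from the origin; $\mathbf{zr}_i(p)=-\infty$ if $\deg p<i$, and $\mathbf{zr}_0(p)=0$. *)

theory Defs
  imports "HOL-Computational_Algebra.Polynomial_Factorial" "HOL-Computational_Algebra.Field_as_Ring" "HOL-Library.Extended_Real"
begin

definition phi :: "nat \<Rightarrow> real \<Rightarrow> real \<Rightarrow> real poly" where
  "phi n a b = (\<Sum>k\<le>n div 2.
     monom (pochhammer (a + 1) n / fact n *
            (pochhammer (- real n) (2*k) * pochhammer (real n + a + b + 1) (2*k)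
              / pochhammer (a + 1) (2*k)) * (1/4) ^ k) k)"

definition real_rooted :: "real poly \<Rightarrow> bool" where
  "real_rooted p \<longleftrightarrow> (\<forall>z::complex. poly (map_poly complex_of_real p) z = 0 \<longrightarrow> z \<in> \<real>)"

definition neg_zeros :: "real poly \<Rightarrow> bool" where
  "neg_zeros p \<longleftrightarrow> (\<forall>x::real. poly p x = 0 \<longrightarrow> x < 0)"

definition one_between :: "real poly \<Rightarrow> real poly \<Rightarrow> bool" where
  "one_between g h \<longleftrightarrow>
     (\<forall>a b. a < b \<and> poly g a = 0 \<and> poly g b = 0 \<and> (\<forall>x. a < x \<and> x < b \<longrightarrow> poly g x \<noteq> 0)
        \<longrightarrow> card {x. a < x \<and> x < b \<and> poly h x = 0} = 1)"

definition interlace_strict :: "real poly \<Rightarrow> real poly \<Rightarrow> bool" where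
  "interlace_strict g h \<longleftrightarrow>
     real_rooted g \<and> real_rooted h \<and> rsquarefree g \<and> rsquarefree h \<and>
     (\<forall>x. \<not> (poly g x = 0 \<and> poly h x = 0)) \<and>
     one_between g h \<and> one_between h g"

definition interlace_nonstrict :: "real poly \<Rightarrow> real poly \<Rightarrow> bool" where
  "interlace_nonstrict g h \<longleftrightarrow>
     real_rooted g \<and> real_rooted h \<and>
     interlace_strict (g div gcd g h) (h div gcd g h)"

text \<open>zr p i: i-th zero (with multiplicity) in order of increasing distance from the
  origin (ties: negative zero first); -infinity if degree p < i; zr p 0 = 0.\<close>
definition zr :: "real poly \<Rightarrow> nat \<Rightarrow> ereal" where
  "zr p i = (if i = 0 then 0 else if degree p < i then -\<infinity>
             else ereal (sort_key abs (sorted_list_of_multiset (proots p)) ! (i - 1)))"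

end

theory Submission
  imports Defs "HOL-Computational_Algebra.Fundamental_Theorem_Algebra"
begin

text \<open>Put \<open>f = phi n a (b - 1)\<close> and let \<open>\<theta> = \<mu> d/d\<mu>\<close> be the Euler operator.  Comparing
  coefficients gives \<open>phi n a b = f + s \<theta>f\<close> and \<open>phi (n - 1) a b = \<kappa> (f - t \<theta>f)\<close> with
  \<open>s, t, \<kappa> > 0\<close>, and all three polynomials have positive coefficients, so their real zeros
  are negative.  Conversely \<open>f\<close> is a positive combination of the two, and a combination of
  strictly interlacing polynomials is real-rooted; for the non-strict case first cancel the
  common factor.  If \<open>f\<close> is real-rooted, write \<open>f = D f0\<close> with \<open>D = gcd f f'\<close>.  Between
  consecutive zeros of \<open>f0\<close> the quotient \<open>f'/D\<close> changes sign, and the resulting sign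
  changes of \<open>g/D\<close> and \<open>h/D\<close> place one zero of each, in that order, in every gap, one zero
  of \<open>g/D\<close> between the largest zero of \<open>f\<close> and \<open>0\<close>, and, when \<open>h\<close> has full degree, one
  zero of \<open>h/D\<close> below the smallest zero.  By degree counting these are all the zeros, so
  \<open>g/D\<close> and \<open>h/D\<close> interlace strictly; if \<open>f\<close> is squarefree then \<open>D = 1\<close>.  The largest
  zero of \<open>g\<close> lies beyond every zero of \<open>h\<close>, which is the statement about \<open>zr\<close>.\<close>

section \<open>Real-rooted polynomials\<close>

abbreviation cpoly :: "real poly \<Rightarrow> complex poly" where
  "cpoly p \<equiv> map_poly complex_of_real p"

lemma cpoly_mult: "cpoly (p * q) = cpoly p * cpoly q"
  by (intro poly_eqI) (simp add: coeff_map_poly coeff_mult of_real_sum)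

lemma poly_cpoly_of_real: "poly (cpoly p) (of_real x) = of_real (poly p x)"
  by (induction p) (auto simp: map_poly_pCons)

lemma degree_cpoly: "degree (cpoly p) = degree p"
  by (rule degree_map_poly) simp

lemma real_rooted_mult:
  assumes "real_rooted p" "real_rooted q"
  shows "real_rooted (p * q)"
  using assms unfolding real_rooted_def by (auto simp: cpoly_mult)

lemma real_rooted_dvd:
  assumes "real_rooted p" "q dvd p" "p \<noteq> 0"
  shows "real_rooted q"
  unfolding real_rooted_def
proof (intro allI impI)
  fix z assume "poly (cpoly q) z = 0"
  moreover obtain r where "p = q * r" using assms(2) by auto
  ultimately have "poly (cpoly p) z = 0" by (simp add: cpoly_mult)
  then show "z \<in> \<real>" using assms(1) unfolding real_rooted_def by blast
qed

lemma real_rooted_degree_le_1: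
  assumes "degree p \<le> 1" "p \<noteq> 0"
  shows "real_rooted p"
  unfolding real_rooted_def
proof (intro allI impI)
  fix z :: complex assume z: "poly (cpoly p) z = 0"
  show "z \<in> \<real>"
  proof (cases "degree p = 0")
    case True
    then obtain c where "p = [:c:]" by (metis degree_eq_zeroE)
    with z assms show ?thesis by (simp add: map_poly_pCons)
  next
    case False
    with assms have d1: "degree p = 1" by simp
    then have c1: "coeff p 1 \<noteq> 0" by (metis leading_coeff_0_iff one_neq_zero assms(2))
    have "poly (cpoly p) z = of_real (coeff p 0) + of_real (coeff p 1) * z"
      using d1 by (simp add: poly_altdef degree_cpoly coeff_map_poly)
    with z have "z = - of_real (coeff p 0) / of_real (coeff p 1)"
      using c1 by (simp add: field_simps add_eq_0_iff)
    then show ?thesis by simp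
  qed
qed

lemma real_rooted_smult:
  assumes "real_rooted p" "c \<noteq> 0"
  shows "real_rooted (smult c p)"
proof -
  have "real_rooted [:c:]" using assms(2) by (intro real_rooted_degree_le_1) auto
  then have "real_rooted ([:c:] * p)" using real_rooted_mult assms(1) by blast
  then show ?thesis by simp
qed

lemma real_rooted_has_root:
  assumes "real_rooted p" "degree p \<ge> 1"
  shows "\<exists>x. poly p x = 0"
proof -
  have "\<not> constant (poly (cpoly p))" using assms by (simp add: constant_degree degree_cpoly)
  then obtain z where z: "poly (cpoly p) z = 0" using fundamental_theorem_of_algebra by blast
  with assms have "z \<in> \<real>" unfolding real_rooted_def by auto
  then obtain x where "z = of_real x" by (auto elim: Reals_cases)
  with z show ?thesis by (auto simp: poly_cpoly_of_real)
qed

lemma prod_linear_factors_dvd: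
  fixes p :: "real poly"
  assumes "finite S" "\<forall>r\<in>S. poly p r = 0"
  shows "\<exists>q. p = (\<Prod>r\<in>S. [:-r,1:]) * q"
  using assms
proof (induction S arbitrary: p rule: finite_induct)
  case empty then show ?case by simp
next
  case (insert r S)
  then have "[:-r,1:] dvd p" by (simp add: poly_eq_0_iff_dvd)
  then obtain q where q: "p = [:-r,1:] * q" by (elim dvdE)
  have "\<forall>x\<in>S. poly q x = 0"
  proof
    fix x assume "x \<in> S"
    with insert have "poly p x = 0" "x \<noteq> r" by auto
    with q show "poly q x = 0" by simp
  qed
  with insert.IH obtain q' where "q = (\<Prod>r\<in>S. [:-r,1:]) * q'" by blast
  with q insert show ?case by (auto simp: mult_ac)
qed

lemma degree_prod_linear_factors: "finite S \<Longrightarrow> degree (\<Prod>r\<in>S. [:-r,1::real:]) = card S"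
  by (subst degree_prod_sum_eq) simp_all

lemma lead_coeff_prod_linear_factors: "lead_coeff (\<Prod>r\<in>S. [:-r,1::real:]) = 1"
  by (simp add: lead_coeff_prod)

lemma prod_linear_factors_neq_0: "(\<Prod>r\<in>S. [:-r,1::real:]) \<noteq> 0"
  by (metis lead_coeff_prod_linear_factors leading_coeff_0_iff one_neq_zero)

lemma prod_linear_factors_dvd_degree:
  fixes p :: "real poly"
  assumes "p \<noteq> 0" "finite S" "\<forall>r\<in>S. poly p r = 0"
  obtains q where "p = (\<Prod>r\<in>S. [:-r,1:]) * q" "q \<noteq> 0" "degree p = card S + degree q"
proof -
  obtain q where q: "p = (\<Prod>r\<in>S. [:-r,1:]) * q" using prod_linear_factors_dvd assms(2,3) by blast
  moreover have "q \<noteq> 0" using q assms(1) by auto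
  moreover have "degree p = card S + degree q" using q \<open>q \<noteq> 0\<close> assms(2)
    by (simp add: degree_mult_eq prod_linear_factors_neq_0 degree_prod_linear_factors)
  ultimately show ?thesis using that by blast
qed

lemma eq_smult_prod_linear_factors:
  fixes p :: "real poly"
  assumes "p \<noteq> 0" "finite S" "\<forall>r\<in>S. poly p r = 0" "card S \<ge> degree p"
  shows "p = smult (lead_coeff p) (\<Prod>r\<in>S. [:-r,1:])"
proof -
  obtain q where q: "p = (\<Prod>r\<in>S. [:-r,1:]) * q" "degree p = card S + degree q"
    using prod_linear_factors_dvd_degree assms(1-3) by blast
  then have "degree q = 0" using assms(4) by simp
  then obtain c where c: "q = [:c:]" by (rule degree_eq_zeroE)
  have pc: "p = smult c (\<Prod>r\<in>S. [:-r,1:])" using q(1) c by simp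
  have "lead_coeff p = c" unfolding pc lead_coeff_smult lead_coeff_prod_linear_factors by simp
  show ?thesis unfolding \<open>lead_coeff p = c\<close> by (rule pc)
qed

lemma real_rooted_if_card_roots_ge:
  fixes p :: "real poly"
  assumes "p \<noteq> 0" "finite S" "\<forall>r\<in>S. poly p r = 0" "card S + 1 \<ge> degree p"
  shows "real_rooted p"
proof -
  obtain q where q: "p = (\<Prod>r\<in>S. [:-r,1:]) * q" "q \<noteq> 0" "degree p = card S + degree q"
    using prod_linear_factors_dvd_degree assms(1-3) by blast
  then have "real_rooted q" using assms(4) real_rooted_degree_le_1 by simp
  moreover have "real_rooted (\<Prod>r\<in>S. [:-r,1:])"
    using assms(2)
  proof (induction S rule: finite_induct)
    case empty then show ?case by (simp add: real_rooted_def)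
  next
    case (insert x S)
    have "real_rooted [:-x,1:]" by (rule real_rooted_degree_le_1) auto
    then show ?case unfolding prod.insert[OF insert(1,2)]
      using insert(3) real_rooted_mult by blast
  qed
  ultimately show ?thesis using q(1) real_rooted_mult by simp
qed

lemma card_roots_if_real_rooted_rsquarefree:
  fixes p :: "real poly"
  assumes "real_rooted p" "rsquarefree p"
  shows "card {x. poly p x = 0} = degree p"
proof -
  define S where "S = {x. poly p x = 0}"
  have pnz: "p \<noteq> 0" using assms by (simp add: rsquarefree_def)
  have fin: "finite S" using pnz by (simp add: S_def poly_roots_finite)
  have "\<forall>r\<in>S. poly p r = 0" by (simp add: S_def)
  then obtain q where q: "p = (\<Prod>r\<in>S. [:-r,1:]) * q" "degree p = card S + degree q"
    using prod_linear_factors_dvd_degree[OF pnz fin] by blast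
  have "degree q = 0"
  proof (rule ccontr)
    assume "degree q \<noteq> 0"
    moreover have "real_rooted q" using real_rooted_dvd[OF assms(1) _ pnz] q by simp
    ultimately obtain x where x: "poly q x = 0" using real_rooted_has_root by fastforce
    have "poly p x = 0" by (subst q(1)) (simp add: x)
    then have "x \<in> S" by (simp add: S_def)
    then have "[:-x,1:] dvd (\<Prod>r\<in>S. [:-r,1:])" using fin by (intro dvd_prodI)
    moreover have "[:-x,1:] dvd q" using x by (simp add: poly_eq_0_iff_dvd)
    ultimately have "[:-x,1:]^2 dvd p" using q(1) by (metis mult_dvd_mono power2_eq_square)
    then have "order x p \<ge> 2" using pnz by (simp add: order_divides)
    moreover have "order x p = 0 \<or> order x p = 1" using assms(2) unfolding rsquarefree_def by blast
    ultimately show False by linarith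
  qed
  with q(2) show ?thesis by (simp add: S_def)
qed

lemma eq_smult_prod_roots_if_real_rooted_rsquarefree:
  fixes p :: "real poly"
  assumes "real_rooted p" "rsquarefree p"
  shows "p = smult (lead_coeff p) (\<Prod>r\<in>{x. poly p x = 0}. [:-r,1:])"
  using assms card_roots_if_real_rooted_rsquarefree[OF assms]
  by (intro eq_smult_prod_linear_factors) (auto simp: rsquarefree_def poly_roots_finite)

lemma simple_real_roots_if_card_roots_ge:
  fixes p :: "real poly"
  assumes "p \<noteq> 0" "finite S" "\<forall>r\<in>S. poly p r = 0" "card S \<ge> degree p"
  shows "real_rooted p" "rsquarefree p" "{x. poly p x = 0} = S"
proof -
  obtain c where p: "p = smult c (\<Prod>r\<in>S. [:-r,1:])" and "c \<noteq> 0"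
    using eq_smult_prod_linear_factors[OF assms] assms(1) by (metis leading_coeff_0_iff)
  have dp: "degree p = card S"
    using \<open>c \<noteq> 0\<close> assms(2) by (simp add: p degree_prod_linear_factors)
  show roots: "{x. poly p x = 0} = S"
    using \<open>c \<noteq> 0\<close> assms(2) by (auto simp: p poly_prod)
  show "real_rooted p"
    using real_rooted_if_card_roots_ge[OF assms(1-3)] dp by simp
  show "rsquarefree p"
    unfolding rsquarefree_def
  proof (intro conjI allI assms(1))
    fix a
    show "order a p = 0 \<or> order a p = 1"
    proof (rule ccontr)
      assume "\<not> (order a p = 0 \<or> order a p = 1)"
      then have "[:-a,1:]^2 dvd p" by (simp add: order_divides)
      then obtain r where r: "p = [:-a,1:]^2 * r" by (elim dvdE)
      define u where "u = [:-a,1:] * r"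
      have u: "p = [:-a,1:] * u" by (simp only: r u_def power2_eq_square mult.assoc)
      have "poly u a = 0" by (simp add: u_def)
      have "u \<noteq> 0" using u assms(1) by auto
      have "degree ([:-a,1:] * u) = degree [:-a,1::real:] + degree u"
        by (rule degree_mult_eq) (use \<open>u \<noteq> 0\<close> in auto)
      then have "degree p = degree u + 1" using u by simp
      have "S \<subseteq> {x. poly u x = 0}" using roots u \<open>poly u a = 0\<close> by auto
      then have "card S \<le> card {x. poly u x = 0}" by (rule card_mono[OF poly_roots_finite[OF \<open>u \<noteq> 0\<close>]])
      also have "\<dots> \<le> degree u" by (rule card_poly_roots_bound[OF \<open>u \<noteq> 0\<close>])
      finally show False using dp \<open>degree p = degree u + 1\<close> by simp
    qed
  qed
qed

lemma prod_diff_sign_pos: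
  fixes x :: real
  assumes "finite S" "x \<notin> S"
  shows "(\<Prod>r\<in>S. (x - r)) * (-1)^card {r\<in>S. x < r} > 0"
  using assms
proof (induction S rule: finite_induct)
  case empty then show ?case by simp
next
  case (insert y S)
  have IH: "(\<Prod>r\<in>S. (x - r)) * (-1)^card {r\<in>S. x < r} > 0" using insert by simp
  show ?case
  proof (cases "x < y")
    case True
    have "{r\<in>insert y S. x < r} = insert y {r\<in>S. x < r}" using True by auto
    then have "card {r\<in>insert y S. x < r} = Suc (card {r\<in>S. x < r})" using insert by simp
    then have "(\<Prod>r\<in>insert y S. (x - r)) * (-1)^card {r\<in>insert y S. x < r}
        = (y - x) * ((\<Prod>r\<in>S. (x - r)) * (-1)^card {r\<in>S. x < r})"
      using insert by (simp add: algebra_simps)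
    then show ?thesis using IH True by simp
  next
    case False
    then have "y < x" using insert by auto
    then have "{r\<in>insert y S. x < r} = {r\<in>S. x < r}" by auto
    then have "(\<Prod>r\<in>insert y S. (x - r)) * (-1)^card {r\<in>insert y S. x < r}
        = (x - y) * ((\<Prod>r\<in>S. (x - r)) * (-1)^card {r\<in>S. x < r})"
      using insert by (simp add: algebra_simps)
    then show ?thesis using IH \<open>y < x\<close> by simp
  qed
qed

lemma sgn_poly_smult_prod_linear_factors:
  fixes p :: "real poly"
  assumes "p = smult c (\<Prod>r\<in>S. [:-r,1:])" "finite S" "x \<notin> S"
  shows "sgn (poly p x) = sgn c * (-1)^card {r\<in>S. x < r}"
proof -
  have pos: "(\<Prod>r\<in>S. (x - r)) * (-1)^card {r\<in>S. x < r} > 0"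
    using prod_diff_sign_pos[OF assms(2,3)] .
  have "sgn (\<Prod>r\<in>S. (x - r)) = (-1)^card {r\<in>S. x < r}"
  proof (cases "even (card {r\<in>S. x < r})")
    case False
    then have "(-1::real)^card {r\<in>S. x < r} = -1" by simp
    then show ?thesis using pos by (simp add: mult_less_0_iff)
  qed (use pos in simp)
  moreover have "poly p x = c * (\<Prod>r\<in>S. (x - r))" using assms by (simp add: poly_prod)
  ultimately show ?thesis by (simp add: sgn_mult)
qed

lemma poly_sign_change_if_one_root_between:
  fixes h :: "real poly"
  assumes "h = smult c (\<Prod>r\<in>H. [:-r,1:])" "finite H" "c \<noteq> 0" "a < b" "a \<notin> H" "b \<notin> H"
    "card {x\<in>H. a < x \<and> x < b} = 1"
  shows "poly h a * poly h b < 0"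
proof -
  have sa: "sgn (poly h a) = sgn c * (-1)^card {r\<in>H. a < r}"
    using sgn_poly_smult_prod_linear_factors assms by blast
  have sb: "sgn (poly h b) = sgn c * (-1)^card {r\<in>H. b < r}"
    using sgn_poly_smult_prod_linear_factors assms by blast
  have "{r\<in>H. a < r} = {x\<in>H. a < x \<and> x < b} \<union> {r\<in>H. b < r}"
    using assms(4,6) by (auto, metis linorder_neqE_linordered_idom)
  moreover have "{x\<in>H. a < x \<and> x < b} \<inter> {r\<in>H. b < r} = {}" by auto
  ultimately have "card {r\<in>H. a < r} = 1 + card {r\<in>H. b < r}"
    using assms(2,7) by (simp add: card_Un_disjoint)
  then have "sgn (poly h a) = - sgn (poly h b)" using sa sb by simp
  moreover have "poly h b \<noteq> 0" using sb assms(3) by (auto simp: sgn_0_0)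
  then have "sgn (poly h b) * sgn (poly h b) = 1" by (simp add: sgn_if)
  ultimately have "sgn (poly h a * poly h b) = -1" by (simp add: sgn_mult)
  then show ?thesis by (simp add: sgn_1_neg)
qed

lemma one_betweenI:
  fixes g h :: "real poly"
  assumes "h \<noteq> 0"
    and gh: "\<And>a b. a < b \<Longrightarrow> poly g a = 0 \<Longrightarrow> poly g b = 0 \<Longrightarrow> \<exists>c. a < c \<and> c < b \<and> poly h c = 0"
    and hg: "\<And>a b. a < b \<Longrightarrow> poly h a = 0 \<Longrightarrow> poly h b = 0 \<Longrightarrow> \<exists>c. a < c \<and> c < b \<and> poly g c = 0"
  shows "one_between g h"
  unfolding one_between_def
proof (intro allI impI)
  fix a b assume ab: "a < b \<and> poly g a = 0 \<and> poly g b = 0 \<and> (\<forall>x. a < x \<and> x < b \<longrightarrow> poly g x \<noteq> 0)"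
  define T where "T = {x. a < x \<and> x < b \<and> poly h x = 0}"
  have fin: "finite T" using poly_roots_finite[OF assms(1)] by (rule finite_subset[rotated]) (auto simp: T_def)
  obtain c where "a < c" "c < b" "poly h c = 0" using gh ab by blast
  then have "card T > 0" using fin by (auto simp: T_def card_gt_0_iff)
  moreover have "\<not> card T \<ge> 2"
  proof
    assume "card T \<ge> 2"
    then have "\<not> card T \<le> Suc 0" by simp
    then obtain c d where "c \<in> T" "d \<in> T" "c \<noteq> d" using card_le_Suc0_iff_eq[OF fin] by blast
    then obtain c d where cd: "c \<in> T" "d \<in> T" "c < d" by (metis linorder_neqE_linordered_idom)
    then obtain e where "c < e" "e < d" "poly g e = 0" using hg by (auto simp: T_def)
    with cd ab show False by (auto simp: T_def)
  qed
  ultimately show "card T = 1" by linarith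
qed

lemma card_le_card_roots_if_root_between:
  fixes c :: "real poly"
  assumes "finite G" "c \<noteq> 0"
    and between: "\<And>a b. a \<in> G \<Longrightarrow> b \<in> G \<Longrightarrow> a < b \<Longrightarrow> \<forall>x\<in>G. \<not> (a < x \<and> x < b)
      \<Longrightarrow> \<exists>x. a < x \<and> x < b \<and> poly c x = 0"
  shows "card G \<le> card {x. poly c x = 0} + 1"
proof (cases "G = {}")
  case False
  define G' where "G' = G - {Max G}"
  define succ where "succ a = Min {b\<in>G. a < b}" for a
  have succ: "succ a \<in> G \<and> a < succ a \<and> (\<forall>x\<in>G. \<not> (a < x \<and> x < succ a))" if "a \<in> G'" for a
  proof -
    have "a \<in> G" "a \<noteq> Max G" using that by (auto simp: G'_def)
    then have "a < Max G" using Max_ge[OF assms(1)] by (simp add: order.not_eq_order_implies_strict)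
    then have "{b\<in>G. a < b} \<noteq> {}" using Max_in[OF assms(1) False] by blast
    then show ?thesis using Min_in[of "{b\<in>G. a < b}"] Min_le[of "{b\<in>G. a < b}"] assms(1)
      unfolding succ_def by force
  qed
  define root where "root a = (SOME x. a < x \<and> x < succ a \<and> poly c x = 0)" for a
  have root: "a < root a \<and> root a < succ a \<and> poly c (root a) = 0" if "a \<in> G'" for a
  proof -
    have "a \<in> G" using that by (simp add: G'_def)
    then have "\<exists>x. a < x \<and> x < succ a \<and> poly c x = 0" using between succ[OF that] by blast
    then show ?thesis unfolding root_def by (rule someI_ex)
  qed
  have mono: "root a < root b" if "a \<in> G'" "b \<in> G'" "a < b" for a b
  proof -
    have "b \<in> G" using that by (simp add: G'_def)
    then have "succ a \<le> b" using succ[OF that(1)] that(3) by (meson not_le)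
    then show ?thesis using root[OF that(1)] root[OF that(2)] by linarith
  qed
  have "inj_on root G'"
  proof (rule inj_onI, rule ccontr)
    fix a b assume "a \<in> G'" "b \<in> G'" "root a = root b" "a \<noteq> b"
    then show False using mono[of a b] mono[of b a] by (cases "a < b") auto
  qed
  then have "card G' \<le> card {x. poly c x = 0}"
    using root poly_roots_finite[OF assms(2)] by (intro card_inj_on_le) auto
  moreover have "card G' + 1 = card G" using False assms(1) card_gt_0_iff[of G] by (simp add: G'_def)
  ultimately show ?thesis by simp
qed simp

text \<open>Hermite-Kakeya-Obreschkoff in the direction needed here: a nonzero real combination of
  strictly interlacing polynomials whose degree does not exceed the larger degree is real-rooted,
  because the combination changes sign between any two consecutive zeros of the first one.\<close>

lemma real_rooted_combination_if_interlace_strict: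
  fixes g h c :: "real poly"
  assumes "interlace_strict g h" "c = smult u g + smult v h" "v \<noteq> 0" "c \<noteq> 0"
    "degree c \<le> degree g"
  shows "real_rooted c"
proof -
  have rg: "real_rooted g" "rsquarefree g" and rh: "real_rooted h" "rsquarefree h"
    and disj: "\<And>x. \<not> (poly g x = 0 \<and> poly h x = 0)" and ob: "one_between g h"
    using assms(1) unfolding interlace_strict_def by auto
  define G where "G = {x. poly g x = 0}"
  define H where "H = {x. poly h x = 0}"
  have "g \<noteq> 0" "h \<noteq> 0" using rg rh by (auto simp: rsquarefree_def)
  then have finG: "finite G" and finH: "finite H" by (simp_all add: G_def H_def poly_roots_finite)
  have h: "h = smult (lead_coeff h) (\<Prod>r\<in>H. [:-r,1:])"
    using eq_smult_prod_roots_if_real_rooted_rsquarefree[OF rh] by (simp add: H_def)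
  have "card G \<le> card {x. poly c x = 0} + 1"
  proof (rule card_le_card_roots_if_root_between[OF finG assms(4)])
    fix a b assume ab: "a \<in> G" "b \<in> G" "a < b" "\<forall>x\<in>G. \<not> (a < x \<and> x < b)"
    then have "a < b \<and> poly g a = 0 \<and> poly g b = 0 \<and> (\<forall>x. a < x \<and> x < b \<longrightarrow> poly g x \<noteq> 0)"
      by (auto simp: G_def)
    then have "card {x. a < x \<and> x < b \<and> poly h x = 0} = 1"
      using ob unfolding one_between_def by blast
    moreover have "{x\<in>H. a < x \<and> x < b} = {x. a < x \<and> x < b \<and> poly h x = 0}"
      by (auto simp: H_def)
    moreover have "a \<notin> H" "b \<notin> H" using disj ab by (auto simp: G_def H_def)
    ultimately have "poly h a * poly h b < 0"
      using poly_sign_change_if_one_root_between[OF h finH] \<open>h \<noteq> 0\<close> ab(3) by simp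
    moreover have "poly c a * poly c b = v\<^sup>2 * (poly h a * poly h b)"
      using assms(2) ab by (simp add: G_def power2_eq_square algebra_simps)
    ultimately have "poly c a * poly c b < 0" using assms(3) by (simp add: mult_pos_neg)
    then show "\<exists>x. a < x \<and> x < b \<and> poly c x = 0" using poly_IVT ab(3) by blast
  qed
  moreover have "card G = degree g"
    using card_roots_if_real_rooted_rsquarefree[OF rg] by (simp add: G_def)
  ultimately show ?thesis
    using real_rooted_if_card_roots_ge[OF assms(4) poly_roots_finite[OF assms(4)]] assms(5) by auto
qed

lemma poly_pos_if_nonneg_coeffs:
  fixes p :: "real poly"
  assumes "\<forall>k. coeff p k \<ge> 0" "coeff p 0 > 0" "x \<ge> 0"
  shows "poly p x > 0"
proof -
  have "poly p x = (\<Sum>i\<le>degree p. coeff p i * x ^ i)" by (simp add: poly_altdef)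
  also have "\<dots> = coeff p 0 + (\<Sum>i\<in>{1..degree p}. coeff p i * x ^ i)"
    by (simp add: atMost_atLeast0 sum.atLeast_Suc_atMost)
  also have "\<dots> \<ge> coeff p 0" using assms by (intro add_increasing2 sum_nonneg) auto
  finally show ?thesis using assms by simp
qed

lemma neg_zeros_if_nonneg_coeffs:
  fixes p :: "real poly"
  assumes "\<forall>k. coeff p k \<ge> 0" "coeff p 0 > 0"
  shows "neg_zeros p"
  unfolding neg_zeros_def using poly_pos_if_nonneg_coeffs[OF assms] by (metis less_irrefl not_less)

lemma sgn_poly_near_minus_infinity:
  fixes p :: "real poly"
  assumes "p \<noteq> 0"
  shows "\<exists>M. \<forall>y\<le>M. sgn (poly p y) = sgn (lead_coeff p) * (-1)^degree p"
proof -
  define \<sigma> where "\<sigma> = sgn (lead_coeff p) * (-1::real)^degree p"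
  have sig: "\<sigma> = 1 \<or> \<sigma> = -1" using assms
    by (cases "even (degree p)") (auto simp: \<sigma>_def sgn_if)
  define r where "r = smult \<sigma> (pcompose p [:0,-1:])"
  have lr: "lead_coeff (pcompose p [:0,-1:]) = lead_coeff p * (-1)^degree p"
    by (subst lead_coeff_comp) simp_all
  have mm: "((-1::real)^degree p) * (-1)^degree p = 1"
    by (cases "even (degree p)") simp_all
  have "lead_coeff r = sgn (lead_coeff p) * lead_coeff p * (((-1::real)^degree p) * (-1)^degree p)"
    unfolding r_def lead_coeff_smult lr \<sigma>_def by (simp only: mult_ac)
  also have "\<dots> = \<bar>lead_coeff p\<bar>" unfolding mm by (simp add: abs_sgn mult.commute)
  finally have "lead_coeff r > 0" using assms by simp
  then obtain N where N: "\<forall>x\<ge>N. poly r x \<ge> lead_coeff r" using poly_pinfty_gt_lc by blast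
  show ?thesis
  proof (intro exI allI impI)
    fix y assume "y \<le> - N"
    then have "-y \<ge> N" by simp
    then have "poly r (-y) \<ge> lead_coeff r" using N by blast
    then have "poly r (-y) > 0" using \<open>lead_coeff r > 0\<close> by linarith
    then have "\<sigma> * poly p y > 0" by (simp add: r_def poly_pcompose)
    then show "sgn (poly p y) = sgn (lead_coeff p) * (-1)^degree p"
      using sig unfolding \<sigma>_def[symmetric] by (auto simp: sgn_if)
  qed
qed

lemma poly_same_sign_if_no_root:
  fixes p :: "real poly"
  assumes "u \<le> v" "\<forall>x. u \<le> x \<and> x \<le> v \<longrightarrow> poly p x \<noteq> 0"
  shows "poly p u * poly p v > 0"
proof (cases "u = v")
  case True
  then have "poly p v \<noteq> 0" using assms by auto
  then show ?thesis using True by (cases "poly p v > 0") (auto simp: mult_neg_neg)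
next
  case False
  with assms have "u < v" by simp
  have "\<not> poly p u * poly p v < 0"
  proof
    assume "poly p u * poly p v < 0"
    then obtain x where "u < x" "x < v" "poly p x = 0" using poly_IVT \<open>u < v\<close> by blast
    with assms show False by auto
  qed
  moreover have "poly p u * poly p v \<noteq> 0" using assms by auto
  ultimately show ?thesis by linarith
qed

lemma poly_neq_0_near:
  fixes q :: "real poly"
  assumes "poly q a \<noteq> 0"
  obtains r where "r > 0" "\<And>z. \<bar>z - a\<bar> < r \<Longrightarrow> poly q z \<noteq> 0"
proof -
  have "poly q \<midarrow>a\<rightarrow> poly q a" using poly_isCont isCont_def by blast
  then obtain r where "r > 0" "\<forall>z. z \<noteq> a \<and> \<bar>a - z\<bar> < r \<longrightarrow> poly q z \<noteq> 0"
    using LIM_fun_not_zero assms by blast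
  then show ?thesis using that assms by (metis abs_minus_commute)
qed

text \<open>Just right of a zero \<open>a\<close> of \<open>f\<close>, \<open>f\<close> and \<open>f'\<close> have the same sign (mean value
  theorem); cancelling the factor \<open>D\<^sup>2\<close> transfers this to \<open>f0\<close> and \<open>q\<close>.  Just left of a
  zero the signs are opposite.\<close>

lemma sgn_right_of_root:
  fixes f D f0 q :: "real poly"
  assumes f: "f = D * f0" and df: "pderiv f = D * q"
    and fa: "poly f a = 0" and qa: "poly q a \<noteq> 0" and ax: "a < x" and xb: "x < b"
    and nr: "\<forall>y. a < y \<and> y < b \<longrightarrow> poly f y \<noteq> 0"
  shows "poly q a * poly f0 x > 0"
proof -
  obtain r where r: "r > 0" "\<And>z. \<bar>z - a\<bar> < r \<Longrightarrow> poly q z \<noteq> 0"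
    using poly_neq_0_near[OF qa] by blast
  define y where "y = min x (a + r / 2)"
  have "poly q z \<noteq> 0" if "a \<le> z" "z \<le> y" for z
    by (rule r(2)) (use that r(1) in \<open>auto simp: y_def\<close>)
  moreover have "a < y" "y \<le> x" using r(1) ax by (auto simp: y_def)
  ultimately have y: "a < y" "y \<le> x" "\<forall>z. a \<le> z \<and> z \<le> y \<longrightarrow> poly q z \<noteq> 0" by auto
  obtain c where c: "a < c" "c < y" "poly f y - poly f a = (y - a) * poly (pderiv f) c"
    using poly_MVT[OF y(1)] by blast
  have fy: "poly f y = (y - a) * (poly D c * poly q c)" using c fa df by simp
  have "poly f c * poly f y > 0"
    using poly_same_sign_if_no_root[of c y f] nr c y xb by auto
  then have "(poly D c * poly f0 c) * ((y - a) * (poly D c * poly q c)) > 0" using fy f by simp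
  then have "(y - a) * ((poly D c)^2 * (poly f0 c * poly q c)) > 0"
    by (simp add: power2_eq_square algebra_simps)
  moreover have "y - a > 0" using y(1) by simp
  ultimately have "(poly D c)^2 * (poly f0 c * poly q c) > 0" by (rule zero_less_mult_pos)
  moreover have "poly D c \<noteq> 0" using nr c y xb f by auto
  then have "(poly D c)^2 > 0" by simp
  ultimately have pos1: "poly f0 c * poly q c > 0" by (rule zero_less_mult_pos)
  have "poly q a * poly q c > 0" using poly_same_sign_if_no_root[of a c q] y c by auto
  moreover have "poly f0 c * poly f0 x > 0"
  proof (rule poly_same_sign_if_no_root)
    show "c \<le> x" using c y by simp
    show "\<forall>z. c \<le> z \<and> z \<le> x \<longrightarrow> poly f0 z \<noteq> 0"
      using nr c y xb f by auto
  qed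
  ultimately have "(poly q a * poly q c) * (poly f0 c * poly f0 x) * (poly f0 c * poly q c) > 0"
    using pos1 by simp
  then have "(poly q a * poly f0 x) * ((poly f0 c * poly q c)^2) > 0"
    by (simp add: power2_eq_square algebra_simps)
  moreover have "poly f0 c * poly q c \<noteq> 0" using pos1 by linarith
  then have "(poly f0 c * poly q c)^2 > 0" by simp
  ultimately show ?thesis by (rule zero_less_mult_pos2)
qed

lemma sgn_left_of_root:
  fixes f D f0 q :: "real poly"
  assumes f: "f = D * f0" and df: "pderiv f = D * q"
    and fb: "poly f b = 0" and qb: "poly q b \<noteq> 0" and ax: "a < x" and xb: "x < b"
    and nr: "\<forall>y. a < y \<and> y < b \<longrightarrow> poly f y \<noteq> 0"
  shows "poly q b * poly f0 x < 0"
proof -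
  obtain r where r: "r > 0" "\<And>z. \<bar>z - b\<bar> < r \<Longrightarrow> poly q z \<noteq> 0"
    using poly_neq_0_near[OF qb] by blast
  define y where "y = max x (b - r / 2)"
  have "poly q z \<noteq> 0" if "y \<le> z" "z \<le> b" for z
    by (rule r(2)) (use that r(1) in \<open>auto simp: y_def\<close>)
  moreover have "x \<le> y" "y < b" using r(1) xb by (auto simp: y_def)
  ultimately have y: "x \<le> y" "y < b" "\<forall>z. y \<le> z \<and> z \<le> b \<longrightarrow> poly q z \<noteq> 0" by auto
  obtain c where c: "y < c" "c < b" "poly f b - poly f y = (b - y) * poly (pderiv f) c"
    using poly_MVT[OF y(2)] by blast
  have fy: "poly f y = - ((b - y) * (poly D c * poly q c))" using c fb df by simp
  have "poly f y * poly f c > 0"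
    using poly_same_sign_if_no_root[of y c f] nr c y ax by auto
  then have "(- ((b - y) * (poly D c * poly q c))) * (poly D c * poly f0 c) > 0" using fy f by simp
  then have "(b - y) * ((poly D c)^2 * (poly f0 c * poly q c)) < 0"
    by (simp add: power2_eq_square algebra_simps)
  moreover have "b - y > 0" using y(2) by simp
  ultimately have "(poly D c)^2 * (poly f0 c * poly q c) < 0" by (simp add: mult_less_0_iff)
  moreover have "poly D c \<noteq> 0" using nr c y ax f by auto
  then have "(poly D c)^2 > 0" by simp
  ultimately have neg1: "poly f0 c * poly q c < 0" by (simp add: mult_less_0_iff)
  have "poly q c * poly q b > 0" using poly_same_sign_if_no_root[of c b q] y c by auto
  moreover have "poly f0 x * poly f0 c > 0"
  proof (rule poly_same_sign_if_no_root)
    show "x \<le> c" using c y by simp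
    show "\<forall>z. x \<le> z \<and> z \<le> c \<longrightarrow> poly f0 z \<noteq> 0"
      using nr c y ax f by auto
  qed
  ultimately have "(poly q c * poly q b) * (poly f0 x * poly f0 c) * (poly f0 c * poly q c) < 0"
    using neg1 by (simp add: mult_pos_neg)
  then have "(poly q b * poly f0 x) * ((poly f0 c * poly q c)^2) < 0"
    by (simp add: power2_eq_square algebra_simps)
  moreover have "poly f0 c * poly q c \<noteq> 0" using neg1 by linarith
  then have "(poly f0 c * poly q c)^2 > 0" by simp
  ultimately show ?thesis by (simp add: mult_less_0_iff)
qed

lemma coprime_X_if_poly_0_neq_0:
  fixes p :: "real poly"
  assumes "poly p 0 \<noteq> 0"
  shows "coprime p [:0,1:]"
proof (rule coprimeI)
  fix d assume dp: "d dvd p" and dX: "d dvd [:0,1:]"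
  from dX obtain e where e: "[:0,1:] = d * e" by (elim dvdE)
  have dnz: "d \<noteq> 0" "e \<noteq> 0" using e by auto
  have "degree (d * e) = degree d + degree e" by (rule degree_mult_eq[OF dnz])
  moreover have "degree ([:0,1:]::real poly) = 1" by simp
  ultimately have "degree d + degree e = 1" unfolding e by simp
  show "is_unit d"
  proof (cases "degree d = 0")
    case True then show ?thesis using dnz by (simp add: is_unit_iff_degree)
  next
    case False
    then have "degree e = 0" using \<open>degree d + degree e = 1\<close> by simp
    then obtain c where c: "e = [:c:]" by (metis degree_eq_zeroE)
    have "poly d 0 * c = 0" using arg_cong[OF e, of "\<lambda>r. poly r 0"] c by (simp add: mult.commute)
    then have "poly d 0 = 0" using c dnz by auto
    moreover from dp obtain k where "p = d * k" by (elim dvdE)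
    ultimately have "poly p 0 = 0" by simp
    with assms show ?thesis by simp
  qed
qed

lemma zr_1_eq_largest_root:
  fixes p :: "real poly"
  assumes "p \<noteq> 0" "degree p \<ge> 1" "poly p r0 = 0" "neg_zeros p"
  shows "\<exists>r. zr p 1 = ereal r \<and> poly p r = 0 \<and> (\<forall>y. poly p y = 0 \<longrightarrow> y \<le> r)"
proof -
  define xs where "xs = sort_key abs (sorted_list_of_multiset (proots p))"
  have setxs: "set xs = {x. poly p x = 0}" using assms(1) by (simp add: xs_def)
  have "xs \<noteq> []" using setxs assms(3) by auto
  then have l: "0 < length xs" by simp
  have srt: "sorted (map abs xs)" by (simp add: xs_def)
  have zr: "zr p 1 = ereal (xs ! 0)" using assms(2) by (simp add: zr_def xs_def)
  have r: "poly p (xs ! 0) = 0" using nth_mem[OF l] setxs by auto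
  have "y \<le> xs ! 0" if "poly p y = 0" for y
  proof -
    have "y \<in> set xs" using that setxs by auto
    then obtain j where j: "j < length xs" "xs ! j = y" by (auto simp: in_set_conv_nth)
    have "map abs xs ! 0 \<le> map abs xs ! j" using sorted_nth_mono[OF srt, of 0 j] j by simp
    then have "\<bar>xs ! 0\<bar> \<le> \<bar>y\<bar>" using j l by simp
    moreover have "xs ! 0 < 0" "y < 0" using r that assms(4) by (auto simp: neg_zeros_def)
    ultimately show ?thesis by simp
  qed
  then show ?thesis using zr r by blast
qed


section \<open>Perturbations by the Euler operator\<close>

definition euler_op :: "real poly \<Rightarrow> real poly" where
  "euler_op p = pCons 0 (pderiv p)"

lemma coeff_euler_op: "coeff (euler_op p) k = real k * coeff p k"
  by (cases k) (simp_all add: euler_op_def coeff_pderiv)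

lemma poly_euler_op: "poly (euler_op p) x = x * poly (pderiv p) x"
  by (simp add: euler_op_def)

locale euler_pair =
  fixes f :: "real poly" and m :: nat and s t \<kappa> :: real
  assumes m_pos: "m \<ge> 1"
    and coeff_f_pos: "\<And>k. k \<le> m \<Longrightarrow> coeff f k > 0" and coeff_f_eq_0: "\<And>k. m < k \<Longrightarrow> coeff f k = 0"
    and s_pos: "s > 0" and t_pos: "t > 0" and \<kappa>_pos: "\<kappa> > 0"
    and t_mult_lt_1: "\<And>k. k < m \<Longrightarrow> t * real k < 1" and t_mult_m_le_1: "t * real m \<le> 1"
begin

text \<open>For \<open>f = phi n a (b - 1)\<close> and suitable \<open>s, t, \<kappa>\<close> these are \<open>phi n a b\<close> and
  \<open>phi (n - 1) a b\<close> (lemma \<open>phi_euler_pair\<close>).\<close>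

definition "g = f + smult s (euler_op f)"
definition "h = smult \<kappa> (f - smult t (euler_op f))"

lemma coeff_g: "coeff g k = coeff f k * (1 + s * real k)"
  by (simp add: g_def coeff_euler_op algebra_simps)

lemma coeff_h: "coeff h k = \<kappa> * (coeff f k * (1 - t * real k))"
  by (simp add: h_def coeff_euler_op algebra_simps)

lemma degree_f: "degree f = m"
proof (rule antisym)
  show "degree f \<le> m" by (rule degree_le) (use coeff_f_eq_0 in auto)
  show "m \<le> degree f" by (rule le_degree) (use coeff_f_pos[of m] in auto)
qed

lemma f_neq_0: "f \<noteq> 0" using degree_f coeff_f_pos[of 0] by auto

lemma pderiv_f_neq_0: "pderiv f \<noteq> 0"
  using degree_f m_pos by (metis pderiv_iszero degree_pCons_0 not_one_le_zero)

lemma coeff_g_pos: "k \<le> m \<Longrightarrow> coeff g k > 0"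
  using coeff_f_pos[of k] s_pos by (simp add: coeff_g add_pos_nonneg)

lemma coeff_h_nonneg: "coeff h k \<ge> 0"
proof (cases "k \<le> m")
  case True
  then have "t * real k \<le> t * real m" using t_pos by (simp add: mult_left_mono)
  then have "1 - t * real k \<ge> 0" using t_mult_m_le_1 by simp
  then show ?thesis using coeff_f_pos[OF True] \<kappa>_pos by (simp add: coeff_h)
next
  case False then show ?thesis using coeff_f_eq_0[of k] by (simp add: coeff_h)
qed

lemma coeff_h_pos: "k < m \<Longrightarrow> coeff h k > 0"
  using coeff_f_pos[of k] t_mult_lt_1[of k] \<kappa>_pos by (simp add: coeff_h)

lemma degree_g: "degree g = m"
proof (rule antisym)
  show "degree g \<le> m" by (rule degree_le) (use coeff_f_eq_0 in \<open>auto simp: coeff_g\<close>)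
  show "m \<le> degree g" by (rule le_degree) (use coeff_g_pos[of m] in auto)
qed

lemma lead_coeff_g_pos: "lead_coeff g > 0" using degree_g coeff_g_pos by simp

lemma degree_h: "degree h = (if t * real m < 1 then m else m - 1)"
proof (cases "t * real m < 1")
  case True
  have "degree h = m"
  proof (rule antisym)
    show "degree h \<le> m" by (rule degree_le) (use coeff_f_eq_0 in \<open>auto simp: coeff_h\<close>)
    show "m \<le> degree h" by (rule le_degree) (use coeff_f_pos[of m] True \<kappa>_pos in \<open>auto simp: coeff_h\<close>)
  qed
  then show ?thesis using True by simp
next
  case False
  then have tm1: "t * real m = 1" using t_mult_m_le_1 by simp
  have "degree h = m - 1"
  proof (rule antisym)
    show "degree h \<le> m - 1"
    proof (rule degree_le, intro allI impI)
      fix k assume "m - 1 < k"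
      then have "k = m \<or> m < k" by linarith
      then show "coeff h k = 0" using coeff_f_eq_0 tm1 by (auto simp: coeff_h)
    qed
    show "m - 1 \<le> degree h" by (rule le_degree) (use coeff_h_pos[of "m - 1"] m_pos in auto)
  qed
  then show ?thesis using False by simp
qed

lemma lead_coeff_h_pos: "lead_coeff h > 0"
  using degree_h coeff_h_pos[of "m - 1"] m_pos coeff_f_pos[of m] \<kappa>_pos by (auto simp: coeff_h)

lemma g_neq_0: "g \<noteq> 0" using lead_coeff_g_pos by auto
lemma h_neq_0: "h \<noteq> 0" using lead_coeff_h_pos by auto

lemma degree_h_le_degree_g: "degree h \<le> degree g" using degree_h degree_g by simp

lemma neg_zeros_g: "neg_zeros g"
proof (rule neg_zeros_if_nonneg_coeffs)
  show "\<forall>k. coeff g k \<ge> 0"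
    using coeff_g_pos coeff_f_eq_0 by (metis coeff_g less_le mult_zero_left not_le)
  show "coeff g 0 > 0" using coeff_g_pos by simp
qed

lemma neg_zeros_h: "neg_zeros h"
  using neg_zeros_if_nonneg_coeffs coeff_h_nonneg coeff_h_pos[of 0] m_pos by simp

lemma neg_zeros_f: "neg_zeros f"
proof (rule neg_zeros_if_nonneg_coeffs)
  show "\<forall>k. coeff f k \<ge> 0" using coeff_f_pos coeff_f_eq_0 by (metis less_le not_le)
  show "coeff f 0 > 0" using coeff_f_pos by simp
qed

lemma f_combination: "smult (s + t) f = smult t g + smult (s / \<kappa>) h"
  using \<kappa>_pos by (intro poly_eqI) (simp add: g_def h_def field_simps)

lemma real_rooted_rsquarefree_f_if_interlace_strict:
  assumes "interlace_strict g h"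
  shows "real_rooted f \<and> rsquarefree f"
proof -
  define c where "c = smult t g + smult (s / \<kappa>) h"
  have c: "c = smult (s + t) f" using f_combination by (simp add: c_def)
  have cnz: "c \<noteq> 0" using c f_neq_0 s_pos t_pos by simp
  have "degree c \<le> degree g" using c degree_f degree_g s_pos t_pos by simp
  then have "real_rooted c" using real_rooted_combination_if_interlace_strict[OF assms c_def _ cnz] s_pos \<kappa>_pos by simp
  then have "real_rooted f"
    using real_rooted_smult[of c "1 / (s + t)"] c s_pos t_pos by simp
  moreover have "rsquarefree f"
    unfolding rsquarefree_roots
  proof (intro allI notI)
    fix a assume a: "poly f a = 0 \<and> poly (pderiv f) a = 0"
    then have "poly g a = 0" "poly h a = 0" by (simp_all add: g_def h_def poly_euler_op)
    with assms show False unfolding interlace_strict_def by blast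
  qed
  ultimately show ?thesis by simp
qed

lemma real_rooted_f_if_interlace_nonstrict:
  assumes "interlace_nonstrict g h"
  shows "real_rooted f"
proof -
  define d where "d = gcd g h"
  define g1 where "g1 = g div d"
  define h1 where "h1 = h div d"
  have "d \<noteq> 0" using g_neq_0 by (simp add: d_def)
  have g: "g = d * g1" and h: "h = d * h1" by (simp_all add: d_def g1_def h1_def)
  have ist: "interlace_strict g1 h1" using assms by (simp add: interlace_nonstrict_def d_def g1_def h1_def)
  have "g1 \<noteq> 0" "h1 \<noteq> 0" using g h g_neq_0 h_neq_0 by auto
  define c where "c = smult t g1 + smult (s / \<kappa>) h1"
  have dc: "d * c = smult (s + t) f" using f_combination g h by (simp add: c_def algebra_simps)
  have "c \<noteq> 0" using dc f_neq_0 s_pos t_pos by auto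
  have "degree h1 \<le> degree g1"
    using degree_h_le_degree_g g h \<open>d \<noteq> 0\<close> \<open>g1 \<noteq> 0\<close> \<open>h1 \<noteq> 0\<close> by (simp add: degree_mult_eq)
  then have "degree c \<le> degree g1"
    unfolding c_def by (meson degree_add_le degree_smult_le order_trans)
  then have "real_rooted c"
    using real_rooted_combination_if_interlace_strict[OF ist c_def _ \<open>c \<noteq> 0\<close>] s_pos \<kappa>_pos by simp
  moreover have "real_rooted d"
    using real_rooted_dvd[OF _ _ g_neq_0] assms g by (simp add: interlace_nonstrict_def)
  ultimately have "real_rooted (smult (1 / (s + t)) (d * c))"
    using s_pos t_pos by (intro real_rooted_smult real_rooted_mult) auto
  then show ?thesis using dc s_pos t_pos by simp
qed


end

context euler_pair begin


definition "D = gcd f (pderiv f)"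
definition "f0 = f div D"
definition "q = pderiv f div D"
definition "g0 = f0 + smult s (pCons 0 q)"
definition "h0 = smult \<kappa> (f0 - smult t (pCons 0 q))"

lemma D_neq_0: "D \<noteq> 0" using f_neq_0 by (simp add: D_def)
lemma f_eq_D_f0: "f = D * f0" by (simp add: D_def f0_def)
lemma pderiv_f_eq_D_q: "pderiv f = D * q" by (simp add: D_def q_def)

lemma g_eq_D_g0: "g = D * g0"
  unfolding g_def g0_def euler_op_def pderiv_f_eq_D_q by (subst f_eq_D_f0) (simp add: algebra_simps)

lemma h_eq_D_h0: "h = D * h0"
  unfolding h_def h0_def euler_op_def pderiv_f_eq_D_q by (subst f_eq_D_f0) (simp add: algebra_simps)

lemma f0_neq_0: "f0 \<noteq> 0"
  using f_eq_D_f0 f_neq_0 by auto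

lemma g0_neq_0: "g0 \<noteq> 0" using g_eq_D_g0 g_neq_0 by auto
lemma h0_neq_0: "h0 \<noteq> 0" using h_eq_D_h0 h_neq_0 by auto

lemma rsquarefree_f0: "rsquarefree f0 \<and> (\<forall>a. poly f0 a = 0 \<longleftrightarrow> poly f a = 0)"
proof (rule poly_squarefree_decomp[OF pderiv_f_neq_0])
  show "f = f0 * D" using f_eq_D_f0 by (simp add: mult.commute)
  show "pderiv f = q * D" using pderiv_f_eq_D_q by (simp add: mult.commute)
  show "D = fst (bezout_coefficients f (pderiv f)) * f + snd (bezout_coefficients f (pderiv f)) * pderiv f"
    unfolding D_def by (rule bezout_coefficients_fst_snd[symmetric])
qed

lemma poly_f0_eq_0_iff: "poly f0 a = 0 \<longleftrightarrow> poly f a = 0" using rsquarefree_f0 by blast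

lemma coprime_f0_q: "coprime f0 q"
proof -
  have "D = gcd f (pderiv f)" by (simp add: D_def)
  also have "\<dots> = gcd (D * f0) (D * q)" by (simp only: f_eq_D_f0[symmetric] pderiv_f_eq_D_q[symmetric])
  also have "\<dots> = normalize D * normalize (gcd f0 q)" by (simp add: gcd_mult_left normalize_mult)
  also have "\<dots> = D * gcd f0 q" by (simp add: D_def)
  finally have "D * 1 = D * gcd f0 q" by simp
  then show ?thesis using D_neq_0 by (simp add: coprime_iff_gcd_eq_1)
qed

lemma poly_f0_0_neq_0: "poly f0 0 \<noteq> 0"
  using poly_f0_eq_0_iff neg_zeros_f unfolding neg_zeros_def by (metis less_irrefl)

lemma coprime_f0_X_q: "coprime f0 (pCons 0 q)"
proof -
  have "pCons 0 q = [:0,1:] * q" by simp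
  moreover have "coprime f0 ([:0,1:] * q)"
    using coprime_X_if_poly_0_neq_0[OF poly_f0_0_neq_0] coprime_f0_q
    by (subst coprime_mult_right_iff) blast
  ultimately show ?thesis by simp
qed

lemma f0_combination: "smult (s + t) f0 = smult t g0 + smult (s / \<kappa>) h0"
  using \<kappa>_pos by (intro poly_eqI) (simp add: g0_def h0_def field_simps coeff_pCons split: nat.split)

lemma X_q_combination: "smult (s + t) (pCons 0 q) = g0 - smult (1 / \<kappa>) h0"
  using \<kappa>_pos by (intro poly_eqI) (simp add: g0_def h0_def field_simps coeff_pCons split: nat.split)

lemma coprime_g0_h0: "coprime g0 h0"
proof (rule coprimeI)
  fix d assume dg: "d dvd g0" and dh: "d dvd h0"
  have "d dvd smult t g0 + smult (s / \<kappa>) h0" using dg dh by (simp add: dvd_add dvd_smult)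
  then have "d dvd smult (s + t) f0" using f0_combination by simp
  then have d1: "d dvd f0" using s_pos t_pos by (simp add: dvd_smult_cancel)
  have "d dvd g0 - smult (1 / \<kappa>) h0" using dg dh by (simp add: dvd_diff dvd_smult)
  then have "d dvd smult (s + t) (pCons 0 q)" using X_q_combination by simp
  then have d2: "d dvd pCons 0 q" using s_pos t_pos by (simp add: dvd_smult_cancel)
  show "is_unit d" using coprime_common_divisor[OF coprime_f0_X_q d1 d2] .
qed

lemma gcd_g_h: "gcd g h = D"
proof -
  have "gcd g h = normalize D * normalize (gcd g0 h0)" unfolding g_eq_D_g0 h_eq_D_h0 by (simp add: gcd_mult_left normalize_mult)
  also have "gcd g0 h0 = 1" using coprime_g0_h0 by (simp add: coprime_iff_gcd_eq_1)
  finally show ?thesis by (simp add: D_def)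
qed

lemma g_div_gcd: "g div gcd g h = g0" unfolding gcd_g_h using g_eq_D_g0 D_neq_0 by simp
lemma h_div_gcd: "h div gcd g h = h0" unfolding gcd_g_h using h_eq_D_h0 D_neq_0 by simp

lemma degree_D_mult: "degree f = degree D + degree f0" "degree g = degree D + degree g0"
    "degree h = degree D + degree h0"
proof -
  have "degree (D * f0) = degree D + degree f0" by (rule degree_mult_eq[OF D_neq_0 f0_neq_0])
  then show "degree f = degree D + degree f0" unfolding f_eq_D_f0[symmetric] .
  have "degree (D * g0) = degree D + degree g0" by (rule degree_mult_eq[OF D_neq_0 g0_neq_0])
  then show "degree g = degree D + degree g0" unfolding g_eq_D_g0[symmetric] .
  have "degree (D * h0) = degree D + degree h0" by (rule degree_mult_eq[OF D_neq_0 h0_neq_0])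
  then show "degree h = degree D + degree h0" unfolding h_eq_D_h0[symmetric] .
qed

lemma D_eq_1_if_rsquarefree:
  assumes "real_rooted f" "rsquarefree f"
  shows "D = 1"
proof -
  have "D dvd f" by (simp add: D_def)
  then have rD: "real_rooted D" using real_rooted_dvd[OF assms(1) _ f_neq_0] by blast
  have "degree D = 0"
  proof (rule ccontr)
    assume "degree D \<noteq> 0"
    then obtain x where x: "poly D x = 0" using real_rooted_has_root[OF rD] by auto
    then have "poly (D * f0) x = 0" "poly (D * q) x = 0" by simp_all
    then have "poly f x = 0" "poly (pderiv f) x = 0" unfolding f_eq_D_f0[symmetric] pderiv_f_eq_D_q[symmetric] .
    with assms(2) show False unfolding rsquarefree_roots by blast
  qed
  then have "is_unit D" using D_neq_0 by (simp add: is_unit_iff_degree)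
  then have "normalize D = 1" by (simp add: is_unit_normalize)
  then show ?thesis by (simp add: D_def)
qed

end
subsection \<open>Interlacing when \<open>f\<close> is real-rooted\<close>

locale real_rooted_euler_pair = euler_pair +
  assumes real_rooted_f: "real_rooted f"
begin

definition "R = {x. poly f x = 0}"

text \<open>The zeros of \<open>f\<close> are negative, so the gap after the largest one is closed off by \<open>0\<close>.\<close>

definition "next_root x = (if \<exists>y\<in>R. x < y then Min {y\<in>R. x < y} else 0)"

lemma finite_R: "finite R" using f_neq_0 by (simp add: R_def poly_roots_finite)
lemma R_neg: "\<rho> \<in> R \<Longrightarrow> \<rho> < 0" using neg_zeros_f by (simp add: R_def neg_zeros_def)
lemma R_eq_roots_f0: "R = {x. poly f0 x = 0}" using poly_f0_eq_0_iff by (simp add: R_def)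

lemma real_rooted_f0: "real_rooted f0"
proof -
  have "f0 dvd f" by (metis f_eq_D_f0 dvd_triv_right)
  then show ?thesis using real_rooted_dvd[OF real_rooted_f _ f_neq_0] by blast
qed

lemma card_R: "card R = degree f0"
  using card_roots_if_real_rooted_rsquarefree[OF real_rooted_f0] rsquarefree_f0 R_eq_roots_f0 by simp

lemma f0_eq_prod: "f0 = smult (lead_coeff f0) (\<Prod>r\<in>R. [:-r,1:])"
  using eq_smult_prod_roots_if_real_rooted_rsquarefree[OF real_rooted_f0] rsquarefree_f0 R_eq_roots_f0 by simp

lemma degree_D_less: "degree D < degree f"
proof -
  have "D dvd pderiv f" by (simp add: D_def)
  then have "degree D \<le> degree (pderiv f)" using dvd_imp_degree D_neq_0 pderiv_f_neq_0 by blast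
  also have "\<dots> < degree f" using degree_f m_pos by (simp add: degree_pderiv)
  finally show ?thesis .
qed

lemma degree_f0_pos: "degree f0 \<ge> 1" using degree_D_less degree_D_mult(1) by simp

lemma R_nonempty: "R \<noteq> {}" using card_R degree_f0_pos by auto

lemma next_root_props:
  assumes "\<rho> \<in> R"
  shows "\<rho> < next_root \<rho>" "next_root \<rho> \<le> 0" "\<And>y. \<rho> < y \<Longrightarrow> y < next_root \<rho> \<Longrightarrow> poly f y \<noteq> 0"
    "\<rho> \<noteq> Max R \<Longrightarrow> next_root \<rho> \<in> R" "\<rho> = Max R \<Longrightarrow> next_root \<rho> = 0"
proof -
  have fin: "finite {y\<in>R. \<rho> < y}" using finite_R by simp
  have neg: "\<rho> < 0" using R_neg assms .
  have maxiff: "(\<exists>y\<in>R. \<rho> < y) \<longleftrightarrow> \<rho> \<noteq> Max R"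
  proof
    assume "\<exists>y\<in>R. \<rho> < y"
    then obtain y where "y \<in> R" "\<rho> < y" by blast
    then show "\<rho> \<noteq> Max R" using finite_R Max_ge[OF finite_R] by fastforce
  next
    assume "\<rho> \<noteq> Max R"
    moreover have "\<rho> \<le> Max R" using Max_ge[OF finite_R assms] .
    ultimately show "\<exists>y\<in>R. \<rho> < y" using Max_in[OF finite_R] assms by force
  qed
  show "\<rho> < next_root \<rho>"
  proof (cases "\<exists>y\<in>R. \<rho> < y")
    case True
    then have "{y\<in>R. \<rho> < y} \<noteq> {}" by blast
    from Min_in[OF fin this] show ?thesis using True by (simp add: next_root_def)
  qed (use neg in \<open>simp add: next_root_def\<close>)
  show "next_root \<rho> \<le> 0"
  proof (cases "\<exists>y\<in>R. \<rho> < y")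
    case True
    then have "{y\<in>R. \<rho> < y} \<noteq> {}" by blast
    from Min_in[OF fin this] show ?thesis using True R_neg by (auto simp: next_root_def intro: less_imp_le)
  qed (simp add: next_root_def)
  show "poly f y \<noteq> 0" if "\<rho> < y" "y < next_root \<rho>" for y
  proof
    assume fy: "poly f y = 0"
    then have yR: "y \<in> R" by (simp add: R_def)
    then have ex: "\<exists>y\<in>R. \<rho> < y" using that by blast
    have "Min {y\<in>R. \<rho> < y} \<le> y" using Min_le[OF fin] yR that by simp
    then show False using that ex by (simp add: next_root_def)
  qed
  show "next_root \<rho> \<in> R" if "\<rho> \<noteq> Max R"
  proof -
    have ex: "\<exists>y\<in>R. \<rho> < y" using maxiff that by blast
    then have "{y\<in>R. \<rho> < y} \<noteq> {}" by blast
    from Min_in[OF fin this] show ?thesis using ex by (simp add: next_root_def)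
  qed
  show "next_root \<rho> = 0" if "\<rho> = Max R"
    using maxiff that by (simp add: next_root_def)
qed

lemma next_root_le:
  assumes "\<rho>1 \<in> R" "\<rho>2 \<in> R" "\<rho>1 < \<rho>2"
  shows "next_root \<rho>1 \<le> \<rho>2"
proof -
  have ex: "\<exists>y\<in>R. \<rho>1 < y" using assms by blast
  have "Min {y\<in>R. \<rho>1 < y} \<le> \<rho>2" using finite_R assms by simp
  then show ?thesis using ex by (simp add: next_root_def)
qed

lemma poly_q_neq_0_on_R: "\<rho> \<in> R \<Longrightarrow> poly q \<rho> \<noteq> 0"
  using coprime_poly_0[OF coprime_f0_q, of \<rho>] R_eq_roots_f0 by auto

lemma poly_g0: "poly g0 x = poly f0 x + s * x * poly q x" by (simp add: g0_def)
lemma poly_h0: "poly h0 x = \<kappa> * (poly f0 x - t * x * poly q x)" by (simp add: h0_def algebra_simps)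

lemma sgn_q_f0_right:
  assumes "\<rho> \<in> R" "\<rho> < x" "x < next_root \<rho>"
  shows "poly q \<rho> * poly f0 x > 0"
proof (rule sgn_right_of_root[OF f_eq_D_f0 pderiv_f_eq_D_q _ poly_q_neq_0_on_R[OF assms(1)] assms(2,3)])
  show "poly f \<rho> = 0" using assms(1) by (simp add: R_def)
  show "\<forall>y. \<rho> < y \<and> y < next_root \<rho> \<longrightarrow> poly f y \<noteq> 0" using next_root_props(3)[OF assms(1)] by blast
qed

lemma sgn_q_f0_left:
  assumes "\<rho> \<in> R" "\<rho> \<noteq> Max R" "\<rho> < x" "x < next_root \<rho>"
  shows "poly q (next_root \<rho>) * poly f0 x < 0"
proof -
  have nR: "next_root \<rho> \<in> R" using next_root_props(4)[OF assms(1,2)] .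
  show ?thesis
  proof (rule sgn_left_of_root[OF f_eq_D_f0 pderiv_f_eq_D_q _ poly_q_neq_0_on_R[OF nR] assms(3,4)])
    show "poly f (next_root \<rho>) = 0" using nR by (simp add: R_def)
    show "\<forall>y. \<rho> < y \<and> y < next_root \<rho> \<longrightarrow> poly f y \<noteq> 0" using next_root_props(3)[OF assms(1)] by blast
  qed
qed

lemma poly_f0_neq_0_gap: "\<rho> \<in> R \<Longrightarrow> \<rho> < y \<Longrightarrow> y < next_root \<rho> \<Longrightarrow> poly f0 y \<noteq> 0"
  using next_root_props(3) poly_f0_eq_0_iff by blast

lemma roots_in_gap:
  assumes "\<rho> \<in> R" "\<rho> \<noteq> Max R"
  shows "\<exists>a b. \<rho> < a \<and> a < b \<and> b < next_root \<rho> \<and> poly g0 a = 0 \<and> poly h0 b = 0"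
proof -
  define \<rho>' where "\<rho>' = next_root \<rho>"
  have r'R: "\<rho>' \<in> R" using next_root_props(4)[OF assms] by (simp add: \<rho>'_def)
  have lt: "\<rho> < \<rho>'" using next_root_props(1)[OF assms(1)] by (simp add: \<rho>'_def)
  define x where "x = (\<rho> + \<rho>') / 2"
  have x: "\<rho> < x" "x < \<rho>'" using lt by (simp_all add: x_def)
  have A: "poly q \<rho> * poly f0 x > 0" using sgn_q_f0_right[OF assms(1)] x by (simp add: \<rho>'_def)
  have B: "poly q \<rho>' * poly f0 x < 0" using sgn_q_f0_left[OF assms] x by (simp add: \<rho>'_def)
  have "(poly q \<rho> * poly f0 x) * (poly q \<rho>' * poly f0 x) < 0" using A B by (simp add: mult_pos_neg)
  then have "(poly q \<rho> * poly q \<rho>') * (poly f0 x)^2 < 0" by (simp add: power2_eq_square algebra_simps)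
  then have "poly q \<rho> * poly q \<rho>' < 0" by (simp add: mult_less_0_iff)
  then obtain \<xi> where xi: "\<rho> < \<xi>" "\<xi> < \<rho>'" "poly q \<xi> = 0" using poly_IVT lt by blast
  have f0r: "poly f0 \<rho> = 0" "poly f0 \<rho>' = 0" using assms(1) r'R R_eq_roots_f0 by auto
  have A': "poly q \<rho> * poly f0 \<xi> > 0" using sgn_q_f0_right[OF assms(1)] xi by (simp add: \<rho>'_def)
  have B': "poly q \<rho>' * poly f0 \<xi> < 0" using sgn_q_f0_left[OF assms] xi by (simp add: \<rho>'_def)
  have "poly g0 \<rho> * poly g0 \<xi> = (s * \<rho>) * (poly q \<rho> * poly f0 \<xi>)"
    using f0r xi by (simp add: poly_g0 algebra_simps)
  moreover have "s * \<rho> < 0" using s_pos R_neg[OF assms(1)] by (simp add: mult_pos_neg)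
  ultimately have "poly g0 \<rho> * poly g0 \<xi> < 0" using A' by (simp add: mult_neg_pos)
  then obtain a where a: "\<rho> < a" "a < \<xi>" "poly g0 a = 0" using poly_IVT xi by blast
  have "poly h0 \<xi> * poly h0 \<rho>' = (- (\<kappa> * \<kappa> * t * \<rho>')) * (poly q \<rho>' * poly f0 \<xi>)"
    using f0r xi by (simp add: poly_h0 algebra_simps)
  moreover have "- (\<kappa> * \<kappa> * t * \<rho>') > 0" using \<kappa>_pos t_pos R_neg[OF r'R]
    by (simp add: mult_pos_neg)
  ultimately have "poly h0 \<xi> * poly h0 \<rho>' < 0" using B' by (metis mult_pos_neg)
  then obtain b where b: "\<xi> < b" "b < \<rho>'" "poly h0 b = 0" using poly_IVT xi by blast
  show ?thesis using a b xi by (intro exI[of _ a] exI[of _ b]) (simp add: \<rho>'_def)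
qed

lemma g0_root_after_max:
  assumes "\<rho> = Max R"
  shows "\<exists>a. \<rho> < a \<and> a < 0 \<and> poly g0 a = 0"
proof -
  have rR: "\<rho> \<in> R" using Max_in[OF finite_R R_nonempty] assms by simp
  have n0: "next_root \<rho> = 0" using next_root_props(5)[OF rR assms] .
  have neg: "\<rho> < 0" using R_neg[OF rR] .
  define x where "x = \<rho> / 2"
  have x: "\<rho> < x" "x < 0" using neg by (simp_all add: x_def)
  have A: "poly q \<rho> * poly f0 x > 0" using sgn_q_f0_right[OF rR] x n0 by simp
  have "poly f0 x * poly f0 0 > 0"
  proof (rule poly_same_sign_if_no_root)
    show "x \<le> 0" using x by simp
    show "\<forall>z. x \<le> z \<and> z \<le> 0 \<longrightarrow> poly f0 z \<noteq> 0"
    proof (intro allI impI)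
      fix z assume z: "x \<le> z \<and> z \<le> 0"
      show "poly f0 z \<noteq> 0"
      proof (cases "z = 0")
        case True then show ?thesis using poly_f0_0_neq_0 by simp
      next
        case False then show ?thesis using poly_f0_neq_0_gap[OF rR, of z] z x n0 by simp
      qed
    qed
  qed
  then have "(poly q \<rho> * poly f0 x) * (poly f0 x * poly f0 0) > 0" using A by simp
  then have "(poly q \<rho> * poly f0 0) * (poly f0 x)^2 > 0" by (simp add: power2_eq_square algebra_simps)
  then have C: "poly q \<rho> * poly f0 0 > 0" by (simp add: zero_less_mult_iff)
  have f0r: "poly f0 \<rho> = 0" using rR R_eq_roots_f0 by auto
  have "poly g0 \<rho> * poly g0 0 = (s * \<rho>) * (poly q \<rho> * poly f0 0)"
    using f0r by (simp add: poly_g0 algebra_simps)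
  moreover have "s * \<rho> < 0" using s_pos neg by (simp add: mult_pos_neg)
  ultimately have "poly g0 \<rho> * poly g0 0 < 0" using C by (simp add: mult_neg_pos)
  then obtain a where "\<rho> < a" "a < 0" "poly g0 a = 0" using poly_IVT neg by blast
  then show ?thesis by blast
qed

lemma lead_coeff_f0_h0_pos: "lead_coeff f0 * lead_coeff h0 > 0"
proof -
  have "lead_coeff (D * f0) = lead_coeff D * lead_coeff f0" by (rule lead_coeff_mult)
  then have "lead_coeff f = lead_coeff D * lead_coeff f0" by (simp only: f_eq_D_f0[symmetric])
  moreover have "lead_coeff h = lead_coeff D * lead_coeff h0" by (simp add: h_eq_D_h0 lead_coeff_mult)
  moreover have "lead_coeff f > 0" using degree_f coeff_f_pos by simp
  ultimately have "(lead_coeff D * lead_coeff f0) * (lead_coeff D * lead_coeff h0) > 0"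
    using lead_coeff_h_pos by simp
  then have "(lead_coeff D)^2 * (lead_coeff f0 * lead_coeff h0) > 0"
    by (simp add: power2_eq_square algebra_simps)
  then show ?thesis by (simp add: zero_less_mult_iff)
qed

lemma sgn_f0_right_of_Min:
  assumes "Min R < x" "x < next_root (Min R)"
  shows "sgn (poly f0 x) = sgn (lead_coeff f0) * (-1)^(degree f0 - 1)"
proof -
  define \<rho> where "\<rho> = Min R"
  have rR: "\<rho> \<in> R" using Min_in[OF finite_R R_nonempty] by (simp add: \<rho>_def)
  have "{r\<in>R. x < r} = R - {\<rho>}"
  proof
    show "{r\<in>R. x < r} \<subseteq> R - {\<rho>}" using assms by (auto simp: \<rho>_def)
    show "R - {\<rho>} \<subseteq> {r\<in>R. x < r}"
    proof
      fix r assume r: "r \<in> R - {\<rho>}"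
      then have "\<rho> \<le> r" using finite_R by (simp add: \<rho>_def)
      then have "\<rho> < r" using r by auto
      then have "next_root \<rho> \<le> r" using next_root_le rR r by blast
      then show "r \<in> {r\<in>R. x < r}" using r assms by (auto simp: \<rho>_def)
    qed
  qed
  then have "card {r\<in>R. x < r} = degree f0 - 1" using card_R rR finite_R by simp
  moreover have "x \<notin> R" using poly_f0_neq_0_gap[OF rR] assms R_eq_roots_f0 by (auto simp: \<rho>_def)
  ultimately show ?thesis
    using sgn_poly_smult_prod_linear_factors[OF f0_eq_prod finite_R] by simp
qed

lemma h0_root_before_min:
  assumes "t * real m < 1"
  shows "\<exists>b. b < Min R \<and> poly h0 b = 0"
proof -
  define \<rho> where "\<rho> = Min R"
  have rR: "\<rho> \<in> R" using Min_in[OF finite_R R_nonempty] by (simp add: \<rho>_def)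
  define x where "x = (\<rho> + next_root \<rho>) / 2"
  have x: "\<rho> < x" "x < next_root \<rho>" using next_root_props(1)[OF rR] by (simp_all add: x_def)
  have "poly h0 \<rho> * poly f0 x = (- (\<kappa> * t * \<rho>)) * (poly q \<rho> * poly f0 x)"
    using rR R_eq_roots_f0 by (simp add: poly_h0 algebra_simps)
  moreover have "- (\<kappa> * t * \<rho>) > 0" using \<kappa>_pos t_pos R_neg[OF rR] by (simp add: mult_pos_neg)
  moreover have "poly q \<rho> * poly f0 x > 0" using sgn_q_f0_right[OF rR] x by simp
  ultimately have hpos: "poly h0 \<rho> * poly f0 x > 0" by (metis mult_pos_pos)
  have sx: "sgn (poly f0 x) = sgn (lead_coeff f0) * (-1)^(degree f0 - 1)"
    using sgn_f0_right_of_Min x by (simp add: \<rho>_def)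
  obtain M where M: "\<forall>y\<le>M. sgn (poly h0 y) = sgn (lead_coeff h0) * (-1)^degree h0"
    using sgn_poly_near_minus_infinity[OF h0_neq_0] by blast
  define y where "y = min M (\<rho> - 1)"
  have y: "y < \<rho>" "y \<le> M" by (simp_all add: y_def)
  have "degree h0 = degree f0"
    using degree_D_mult degree_h degree_f assms by simp
  moreover have "sgn (lead_coeff h0) = sgn (lead_coeff f0)" using lead_coeff_f0_h0_pos
    by (auto simp: sgn_if zero_less_mult_iff)
  moreover have "(-1::real)^degree f0 = - ((-1)^(degree f0 - 1))" using degree_f0_pos
    by (metis Suc_diff_1 less_le_trans zero_less_one power_Suc mult_minus1)
  ultimately have "sgn (poly h0 y) = - sgn (poly f0 x)" using M y sx by simp
  moreover have "sgn (poly h0 \<rho>) = sgn (poly f0 x)" using hpos by (auto simp: sgn_if zero_less_mult_iff)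
  moreover have "poly f0 x \<noteq> 0" using hpos by auto
  ultimately have "poly h0 y * poly h0 \<rho> < 0"
    by (cases "poly f0 x > 0") (auto simp: sgn_if mult_less_0_iff split: if_splits)
  then obtain b where "y < b" "b < \<rho>" "poly h0 b = 0" using poly_IVT y by blast
  then show ?thesis by (auto simp: \<rho>_def)
qed

text \<open>Choice of the zeros of \<open>g0\<close> and \<open>h0\<close>: in every gap between consecutive zeros of
  \<open>f0\<close> a zero of \<open>g0\<close> followed by a zero of \<open>h0\<close>, a zero of \<open>g0\<close> between the largest zero
  and \<open>0\<close>, and, if \<open>degree h = degree f\<close>, a zero of \<open>h0\<close> below the smallest zero.  Counting
  degrees shows these are all the zeros, and they alternate.\<close>

definition "gap_pair \<rho> = (SOME p. \<rho> < fst p \<and> fst p < snd p \<and> snd p < next_root \<rho> \<and> poly g0 (fst p) = 0 \<and> poly h0 (snd p) = 0)"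
definition "g_zero_after \<rho> = (if \<rho> = Max R then (SOME a. \<rho> < a \<and> a < 0 \<and> poly g0 a = 0) else fst (gap_pair \<rho>))"
definition "h_zero_after \<rho> = snd (gap_pair \<rho>)"
definition "h_zero_first = (SOME b. b < Min R \<and> poly h0 b = 0)"
definition "R_inner = R - {Max R}"
definition "G0 = g_zero_after ` R"
definition "H0 = h_zero_after ` R_inner \<union> (if t * real m < 1 then {h_zero_first} else {})"

lemma gap_pair_props:
  assumes "\<rho> \<in> R" "\<rho> \<noteq> Max R"
  shows "\<rho> < fst (gap_pair \<rho>) \<and> fst (gap_pair \<rho>) < snd (gap_pair \<rho>) \<and> snd (gap_pair \<rho>) < next_root \<rho> \<and> poly g0 (fst (gap_pair \<rho>)) = 0 \<and> poly h0 (snd (gap_pair \<rho>)) = 0"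
proof -
  obtain a b where "\<rho> < a \<and> a < b \<and> b < next_root \<rho> \<and> poly g0 a = 0 \<and> poly h0 b = 0"
    using roots_in_gap[OF assms] by blast
  then have "\<exists>p. \<rho> < fst p \<and> fst p < snd p \<and> snd p < next_root \<rho> \<and> poly g0 (fst p) = 0 \<and> poly h0 (snd p) = 0"
    by (intro exI[of _ "(a, b)"]) simp
  then show ?thesis unfolding gap_pair_def by (rule someI_ex)
qed

lemma g_zero_after_props:
  assumes "\<rho> \<in> R"
  shows "\<rho> < g_zero_after \<rho> \<and> g_zero_after \<rho> < next_root \<rho> \<and> poly g0 (g_zero_after \<rho>) = 0"
proof (cases "\<rho> = Max R")
  case True
  have ex: "\<exists>a. \<rho> < a \<and> a < 0 \<and> poly g0 a = 0" using g0_root_after_max[OF True] .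
  have "g_zero_after \<rho> = (SOME a. \<rho> < a \<and> a < 0 \<and> poly g0 a = 0)" using True by (simp add: g_zero_after_def)
  then have "\<rho> < g_zero_after \<rho> \<and> g_zero_after \<rho> < 0 \<and> poly g0 (g_zero_after \<rho>) = 0" using someI_ex[OF ex] by simp
  then show ?thesis using next_root_props(5)[OF assms True] by simp
next
  case False
  then show ?thesis using gap_pair_props[OF assms False] by (simp add: g_zero_after_def)
qed

lemma h_zero_after_props:
  assumes "\<rho> \<in> R_inner"
  shows "g_zero_after \<rho> < h_zero_after \<rho> \<and> h_zero_after \<rho> < next_root \<rho> \<and> poly h0 (h_zero_after \<rho>) = 0 \<and> next_root \<rho> \<in> R"
proof -
  have r: "\<rho> \<in> R" "\<rho> \<noteq> Max R" using assms by (auto simp: R_inner_def)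
  show ?thesis using gap_pair_props[OF r] next_root_props(4)[OF r] r by (simp add: g_zero_after_def h_zero_after_def)
qed

lemma h_zero_first_props:
  assumes "t * real m < 1"
  shows "h_zero_first < Min R \<and> poly h0 h_zero_first = 0"
  using h0_root_before_min[OF assms] unfolding h_zero_first_def by (rule someI_ex)

lemma g_zero_after_less: "\<rho>1 \<in> R \<Longrightarrow> \<rho>2 \<in> R \<Longrightarrow> \<rho>1 < \<rho>2 \<Longrightarrow> g_zero_after \<rho>1 < \<rho>2"
  using g_zero_after_props next_root_le by (meson less_le_trans)

lemma h_zero_after_less: "\<rho>1 \<in> R_inner \<Longrightarrow> \<rho>2 \<in> R \<Longrightarrow> \<rho>1 < \<rho>2 \<Longrightarrow> h_zero_after \<rho>1 < \<rho>2"
  using h_zero_after_props next_root_le by (metis R_inner_def DiffD1 less_le_trans)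

lemma g_zero_after_greater: "\<rho> \<in> R \<Longrightarrow> \<rho> < g_zero_after \<rho>" using g_zero_after_props by blast
lemma h_zero_after_greater: "\<rho> \<in> R_inner \<Longrightarrow> \<rho> < h_zero_after \<rho>"
  using h_zero_after_props g_zero_after_props by (metis R_inner_def DiffD1 less_trans)

lemma R_inner_subset: "R_inner \<subseteq> R" by (auto simp: R_inner_def)

lemma h_zero_first_less: "t * real m < 1 \<Longrightarrow> \<rho> \<in> R \<Longrightarrow> h_zero_first < \<rho>"
  using h_zero_first_props Min_le[OF finite_R] by (meson less_le_trans)

lemma inj_g_zero_after: "inj_on g_zero_after R"
proof (rule inj_onI)
  fix x y assume xy: "x \<in> R" "y \<in> R" "g_zero_after x = g_zero_after y"
  show "x = y"
  proof (rule ccontr)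
    assume "x \<noteq> y"
    then consider "x < y" | "y < x" by linarith
    then show False
    proof cases
      case 1 then show False using g_zero_after_less[OF xy(1,2) 1] g_zero_after_greater[OF xy(2)] xy(3) by simp
    next
      case 2 then show False using g_zero_after_less[OF xy(2,1) 2] g_zero_after_greater[OF xy(1)] xy(3) by simp
    qed
  qed
qed

lemma inj_h_zero_after: "inj_on h_zero_after R_inner"
proof (rule inj_onI)
  fix x y assume xy: "x \<in> R_inner" "y \<in> R_inner" "h_zero_after x = h_zero_after y"
  have xR: "x \<in> R" "y \<in> R" using xy R_inner_subset by auto
  show "x = y"
  proof (rule ccontr)
    assume "x \<noteq> y"
    then consider "x < y" | "y < x" by linarith
    then show False
    proof cases
      case 1 then show False using h_zero_after_less[OF xy(1) xR(2) 1] h_zero_after_greater[OF xy(2)] xy(3) by simp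
    next
      case 2 then show False using h_zero_after_less[OF xy(2) xR(1) 2] h_zero_after_greater[OF xy(1)] xy(3) by simp
    qed
  qed
qed

lemma card_G0: "card G0 = card R" using card_image[OF inj_g_zero_after] by (simp add: G0_def)

lemma card_R_inner: "card R_inner + 1 = card R"
  using finite_R R_nonempty Max_in[OF finite_R R_nonempty] card_gt_0_iff[of R] by (simp add: R_inner_def)

lemma finite_R_inner: "finite R_inner" using finite_R by (simp add: R_inner_def)

lemma h_zero_first_notin: "t * real m < 1 \<Longrightarrow> h_zero_first \<notin> h_zero_after ` R_inner"
proof
  assume t_mult_m_le_1: "t * real m < 1" and "h_zero_first \<in> h_zero_after ` R_inner"
  then obtain \<rho> where r: "\<rho> \<in> R_inner" "h_zero_first = h_zero_after \<rho>" by auto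
  then show False using h_zero_first_less[OF t_mult_m_le_1, of \<rho>] h_zero_after_greater[OF r(1)] R_inner_subset by auto
qed

lemma card_H0: "card H0 = (if t * real m < 1 then card R else card R - 1)"
proof (cases "t * real m < 1")
  case True
  have "card H0 = card (insert h_zero_first (h_zero_after ` R_inner))" using True by (simp add: H0_def)
  also have "\<dots> = Suc (card (h_zero_after ` R_inner))" using h_zero_first_notin[OF True] finite_R_inner by simp
  also have "\<dots> = card R" using card_image[OF inj_h_zero_after] card_R_inner by simp
  finally show ?thesis using True by simp
next
  case False
  then have "card H0 = card (h_zero_after ` R_inner)" by (simp add: H0_def)
  also have "\<dots> = card R - 1" using card_image[OF inj_h_zero_after] card_R_inner by simp
  finally show ?thesis using False by simp
qed

lemma degree_g0: "degree g0 = card R"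
  using degree_D_mult degree_g degree_f card_R by simp

lemma degree_h0: "degree h0 = card H0"
  using degree_D_mult degree_h degree_f card_R card_H0 degree_f0_pos by auto

lemma G0_roots: "\<forall>x\<in>G0. poly g0 x = 0" using g_zero_after_props by (auto simp: G0_def)
lemma H0_roots: "\<forall>x\<in>H0. poly h0 x = 0"
  using h_zero_after_props h_zero_first_props by (auto simp: H0_def split: if_splits)

lemma finite_G0: "finite G0" using finite_R by (simp add: G0_def)
lemma finite_H0: "finite H0" using finite_R_inner by (simp add: H0_def)

lemma g0_props: "real_rooted g0 \<and> rsquarefree g0 \<and> {x. poly g0 x = 0} = G0"
  using simple_real_roots_if_card_roots_ge[OF g0_neq_0 finite_G0 G0_roots] card_G0 degree_g0 by simp

lemma h0_props: "real_rooted h0 \<and> rsquarefree h0 \<and> {x. poly h0 x = 0} = H0"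
  using simple_real_roots_if_card_roots_ge[OF h0_neq_0 finite_H0 H0_roots] degree_h0 by simp

lemma g0_root_iff: "poly g0 x = 0 \<longleftrightarrow> x \<in> G0" using g0_props by blast
lemma h0_root_iff: "poly h0 x = 0 \<longleftrightarrow> x \<in> H0" using h0_props by blast

lemma H0_cases:
  assumes "u \<in> H0"
  obtains \<rho> where "\<rho> \<in> R_inner" "u = h_zero_after \<rho>" | "t * real m < 1" "u = h_zero_first"
  using assms by (auto simp: H0_def split: if_splits)

lemma G0_H0_disjoint: "G0 \<inter> H0 = {}"
proof (rule ccontr)
  assume "G0 \<inter> H0 \<noteq> {}"
  then obtain u where uG: "u \<in> G0" and uH: "u \<in> H0" by blast
  from uG obtain \<rho>1 where r1: "\<rho>1 \<in> R" "u = g_zero_after \<rho>1" by (auto simp: G0_def)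
  from uH show False
  proof (cases rule: H0_cases)
    case (1 \<rho>2)
    have r2: "\<rho>2 \<in> R" using 1 R_inner_subset by auto
    consider "\<rho>1 = \<rho>2" | "\<rho>1 < \<rho>2" | "\<rho>2 < \<rho>1" by linarith
    then show False
    proof cases
      case 1 then show False using h_zero_after_props[OF \<open>\<rho>2 \<in> R_inner\<close>] r1 \<open>u = h_zero_after \<rho>2\<close> by simp
    next
      case 2 then show False using g_zero_after_less[OF r1(1) r2 2] h_zero_after_greater[OF \<open>\<rho>2 \<in> R_inner\<close>] r1 \<open>u = h_zero_after \<rho>2\<close> by simp
    next
      case 3 then show False using h_zero_after_less[OF \<open>\<rho>2 \<in> R_inner\<close> r1(1) 3] g_zero_after_greater[OF r1(1)] r1 \<open>u = h_zero_after \<rho>2\<close> by simp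
    qed
  next
    case 2
    then show False using h_zero_first_less[OF 2(1) r1(1)] g_zero_after_greater[OF r1(1)] r1 by simp
  qed
qed

lemma H0_between_G0:
  assumes "a \<in> G0" "b \<in> G0" "a < b"
  shows "\<exists>c. a < c \<and> c < b \<and> c \<in> H0"
proof -
  obtain \<rho>1 \<rho>2 where r: "\<rho>1 \<in> R" "\<rho>2 \<in> R" "a = g_zero_after \<rho>1" "b = g_zero_after \<rho>2"
    using assms by (auto simp: G0_def)
  have "\<rho>1 < \<rho>2"
  proof (rule ccontr)
    assume "\<not> \<rho>1 < \<rho>2"
    then consider "\<rho>1 = \<rho>2" | "\<rho>2 < \<rho>1" by linarith
    then show False
    proof cases
      case 1 then show False using r assms(3) by simp
    next
      case 2 then show False using g_zero_after_less[OF r(2,1) 2] g_zero_after_greater[OF r(1)] r assms(3) by simp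
    qed
  qed
  have "\<rho>1 \<noteq> Max R" using \<open>\<rho>1 < \<rho>2\<close> Max_ge[OF finite_R r(2)] by linarith
  then have r1': "\<rho>1 \<in> R_inner" using r(1) by (simp add: R_inner_def)
  have "a < h_zero_after \<rho>1" using h_zero_after_props[OF r1'] r by simp
  moreover have "h_zero_after \<rho>1 < b" using h_zero_after_less[OF r1' r(2) \<open>\<rho>1 < \<rho>2\<close>] g_zero_after_greater[OF r(2)] r by simp
  moreover have "h_zero_after \<rho>1 \<in> H0" using r1' by (simp add: H0_def)
  ultimately show ?thesis by blast
qed

lemma g_zero_after_less_h_zero_after: "\<rho>1 \<in> R \<Longrightarrow> \<rho>2 \<in> R_inner \<Longrightarrow> \<rho>1 \<le> \<rho>2 \<Longrightarrow> g_zero_after \<rho>1 < h_zero_after \<rho>2"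
proof -
  assume a: "\<rho>1 \<in> R" "\<rho>2 \<in> R_inner" "\<rho>1 \<le> \<rho>2"
  show "g_zero_after \<rho>1 < h_zero_after \<rho>2"
  proof (cases "\<rho>1 = \<rho>2")
    case True then show ?thesis using h_zero_after_props[OF a(2)] by simp
  next
    case False
    then have "\<rho>1 < \<rho>2" using a by simp
    then show ?thesis using g_zero_after_less[OF a(1) _ \<open>\<rho>1 < \<rho>2\<close>] h_zero_after_greater[OF a(2)] R_inner_subset a(2) by force
  qed
qed

lemma root_between_H0_and_h_zero_after:
  assumes "a \<in> H0" "\<rho> \<in> R_inner" "a < h_zero_after \<rho>"
  shows "\<exists>\<sigma>\<in>R. a < \<sigma> \<and> \<sigma> \<le> \<rho>"
  using assms(1)
proof (cases rule: H0_cases)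
  case (1 \<rho>1)
  have r: "\<rho> \<in> R" "\<rho>1 \<in> R" using assms(2) 1(1) R_inner_subset by auto
  have "\<rho>1 < \<rho>"
  proof (rule ccontr)
    assume "\<not> \<rho>1 < \<rho>"
    then consider "\<rho>1 = \<rho>" | "\<rho> < \<rho>1" by linarith
    then show False
    proof cases
      case 2
      then show False using h_zero_after_less[OF assms(2) r(2)] h_zero_after_greater[OF 1(1)] 1(2) assms(3)
        by simp
    qed (use 1(2) assms(3) in simp)
  qed
  then show ?thesis
    using h_zero_after_props[OF 1(1)] next_root_le[OF r(2,1)] 1(2) by (intro bexI[of _ "next_root \<rho>1"]) auto
next
  case 2
  have "Min R \<in> R" "Min R \<le> \<rho>" using Min_in[OF finite_R R_nonempty] Min_le[OF finite_R] assms(2) R_inner_subset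
    by auto
  then show ?thesis using h_zero_first_less[OF 2(1)] 2(2) by (intro bexI[of _ "Min R"]) auto
qed

lemma G0_between_H0:
  assumes "a \<in> H0" "b \<in> H0" "a < b"
  shows "\<exists>c. a < c \<and> c < b \<and> c \<in> G0"
  using assms(2)
proof (cases rule: H0_cases)
  case (1 \<rho>)
  then obtain \<sigma> where "\<sigma> \<in> R" "a < \<sigma>" "\<sigma> \<le> \<rho>"
    using root_between_H0_and_h_zero_after assms(1,3) by blast
  then show ?thesis
    using g_zero_after_greater[of \<sigma>] g_zero_after_less_h_zero_after[of \<sigma> \<rho>] 1
    by (intro exI[of _ "g_zero_after \<sigma>"]) (auto simp: G0_def)
next
  case 2
  from assms(1) show ?thesis
  proof (cases rule: H0_cases)
    case (1 \<rho>)
    then have "\<rho> \<in> R" using R_inner_subset by auto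
    then show ?thesis
      using h_zero_first_less[OF 2(1)] h_zero_after_greater[OF 1(1)] 1(2) 2(2) assms(3) by force
  qed (use 2(2) assms(3) in simp)
qed

lemma interlace_strict_g0_h0: "interlace_strict g0 h0"
  unfolding interlace_strict_def
proof (intro conjI)
  show "real_rooted g0" "rsquarefree g0" using g0_props by auto
  show "real_rooted h0" "rsquarefree h0" using h0_props by auto
  show "\<forall>x. \<not> (poly g0 x = 0 \<and> poly h0 x = 0)" using G0_H0_disjoint g0_root_iff h0_root_iff by blast
  show "one_between g0 h0"
    by (rule one_betweenI[OF h0_neq_0]) (use H0_between_G0 G0_between_H0 in \<open>auto simp: g0_root_iff h0_root_iff\<close>)
  show "one_between h0 g0"
    by (rule one_betweenI[OF g0_neq_0]) (use H0_between_G0 G0_between_H0 in \<open>auto simp: g0_root_iff h0_root_iff\<close>)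
qed

lemma real_rooted_D: "real_rooted D"
proof -
  have "D dvd f" by (simp add: D_def)
  then show ?thesis using real_rooted_dvd[OF real_rooted_f _ f_neq_0] by blast
qed

lemma real_rooted_g: "real_rooted g" using real_rooted_mult[OF real_rooted_D] g0_props g_eq_D_g0 by simp
lemma real_rooted_h: "real_rooted h" using real_rooted_mult[OF real_rooted_D] h0_props h_eq_D_h0 by simp

lemma interlace_nonstrict_g_h: "interlace_nonstrict g h"
  unfolding interlace_nonstrict_def g_div_gcd h_div_gcd using real_rooted_g real_rooted_h interlace_strict_g0_h0 by simp

lemma interlace_strict_g_h_if_rsquarefree: "rsquarefree f \<Longrightarrow> interlace_strict g h"
proof -
  assume "rsquarefree f"
  then have "D = 1" using D_eq_1_if_rsquarefree real_rooted_f by blast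
  then have "g = g0" "h = h0" using g_eq_D_g0 h_eq_D_h0 by simp_all
  then show ?thesis using interlace_strict_g0_h0 by simp
qed

lemma h_root_less_g_zero_after_Max:
  assumes "poly h r = 0"
  shows "r < g_zero_after (Max R)"
proof -
  have MR: "Max R \<in> R" using Max_in[OF finite_R R_nonempty] .
  have "r \<le> Max R" if "poly D r = 0"
  proof -
    have "poly (D * f0) r = 0" using that by simp
    then have "poly f r = 0" by (simp only: f_eq_D_f0[symmetric])
    then show ?thesis using Max_ge[OF finite_R] by (simp add: R_def)
  qed
  moreover have "r < Max R" if "poly h0 r = 0"
  proof -
    have "r \<in> H0" using that h0_root_iff by simp
    then show ?thesis
    proof (cases rule: H0_cases)
      case (1 \<rho>)
      then have "h_zero_after \<rho> < next_root \<rho>" "next_root \<rho> \<in> R" using h_zero_after_props by auto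
      then show ?thesis using Max_ge[OF finite_R] 1(2) by (metis less_le_trans)
    qed (use h_zero_first_less[OF _ MR] in simp)
  qed
  moreover have "poly D r = 0 \<or> poly h0 r = 0" using assms h_eq_D_h0 by simp
  ultimately show ?thesis using g_zero_after_greater[OF MR] by fastforce
qed

lemma zr_h_le_zr_g: "zr h 1 \<le> zr g 1"
proof (cases "degree h < 1")
  case True then show ?thesis by (simp add: zr_def)
next
  case False
  then obtain y where "poly h y = 0" using real_rooted_has_root[OF real_rooted_h] by auto
  then obtain r where r: "zr h 1 = ereal r" "poly h r = 0"
    using zr_1_eq_largest_root[OF h_neq_0 _ _ neg_zeros_h] False by force
  have MR: "Max R \<in> R" using Max_in[OF finite_R R_nonempty] .
  have gal: "poly g (g_zero_after (Max R)) = 0" using g_zero_after_props[OF MR] g_eq_D_g0 by simp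
  obtain r' where r': "zr g 1 = ereal r'" "\<forall>y. poly g y = 0 \<longrightarrow> y \<le> r'"
    using zr_1_eq_largest_root[OF g_neq_0 _ gal neg_zeros_g] degree_g m_pos by force
  have "r \<le> r'" using h_root_less_g_zero_after_Max[OF r(2)] r'(2) gal by force
  then show ?thesis using r r' by simp
qed

end

context euler_pair begin

lemma real_rooted_euler_pair_if_real_rooted:
  "real_rooted f \<Longrightarrow> real_rooted_euler_pair f m s t \<kappa>"
  by (intro real_rooted_euler_pair.intro euler_pair_axioms real_rooted_euler_pair_axioms.intro)

lemma interlace_nonstrict_iff_real_rooted:
  "neg_zeros g \<and> neg_zeros h \<and> interlace_nonstrict g h \<longleftrightarrow> real_rooted f"
  using neg_zeros_g neg_zeros_h real_rooted_f_if_interlace_nonstrict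
    real_rooted_euler_pair.interlace_nonstrict_g_h[OF real_rooted_euler_pair_if_real_rooted]
  by blast

lemma interlace_strict_iff_real_rooted_rsquarefree:
  "neg_zeros g \<and> neg_zeros h \<and> interlace_strict g h \<longleftrightarrow> real_rooted f \<and> rsquarefree f"
  using neg_zeros_g neg_zeros_h real_rooted_rsquarefree_f_if_interlace_strict
    real_rooted_euler_pair.interlace_strict_g_h_if_rsquarefree[OF real_rooted_euler_pair_if_real_rooted]
  by blast

lemma zr_1_h_le_zr_1_g: "real_rooted f \<Longrightarrow> zr h 1 \<le> zr g 1"
  using real_rooted_euler_pair.zr_h_le_zr_g[OF real_rooted_euler_pair_if_real_rooted] by blast

end

section \<open>The coefficients of \<open>phi\<close>\<close>

definition phi_coeff :: "nat \<Rightarrow> real \<Rightarrow> real \<Rightarrow> nat \<Rightarrow> real" where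
  "phi_coeff n a b k = pochhammer (a + 1) n / fact n *
            (pochhammer (- real n) (2*k) * pochhammer (real n + a + b + 1) (2*k)
              / pochhammer (a + 1) (2*k)) * (1/4) ^ k"

lemma coeff_phi: "coeff (phi n a b) k = (if k \<le> n div 2 then phi_coeff n a b k else 0)"
  unfolding phi_def phi_coeff_def by (simp add: coeff_sum coeff_monom)

lemma pochhammer_minus_even_pos:
  assumes "2 * k \<le> n"
  shows "pochhammer (- real n) (2*k) > 0"
proof -
  have "pochhammer (- real n) (2*k) = (-1)^(2*k) * pochhammer (real n - real (2*k) + 1) (2*k)"
    by (rule pochhammer_minus)
  also have "\<dots> > 0" using assms by (simp add: pochhammer_pos)
  finally show ?thesis .
qed

lemma phi_coeff_pos:
  assumes "a > -1" "real n + a + b + 1 > 0" "k \<le> n div 2"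
  shows "phi_coeff n a b k > 0"
  using assms pochhammer_minus_even_pos[of k n] unfolding phi_coeff_def by (simp add: pochhammer_pos)

lemma pochhammer_shift: "x * pochhammer (x + 1) j = pochhammer x j * (x + real j)"
  by (metis pochhammer_rec pochhammer_Suc)

lemma coeff_phi_b_minus_1:
  assumes "real n + a + b > 0"
  shows "coeff (phi n a b) k = coeff (phi n a (b - 1)) k * (1 + 2 / (real n + a + b) * real k)"
proof (cases "k \<le> n div 2")
  case True
  define N where "N = real n + a + b"
  have "N * pochhammer (N + 1) (2*k) = pochhammer N (2*k) * (N + 2 * real k)"
    using pochhammer_shift[of N "2*k"] by simp
  then have shift: "pochhammer (N + 1) (2*k) = pochhammer N (2*k) * (1 + 2 / N * real k)"
    using assms by (simp add: N_def divide_simps mult.commute)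
  have N: "real n + a + (b - 1) + 1 = N" "real n + a + b + 1 = N + 1" by (simp_all add: N_def)
  have "phi_coeff n a b k = phi_coeff n a (b - 1) k * (1 + 2 / N * real k)"
    unfolding phi_coeff_def N shift by (simp only: mult_ac times_divide_eq_left times_divide_eq_right)
  then show ?thesis using True by (simp add: coeff_phi N_def)
qed (simp add: coeff_phi)

lemma coeff_phi_n_minus_1:
  assumes "n \<ge> 1" "a > -1"
  shows "coeff (phi (n - 1) a b) k
    = real n / (real n + a) * (coeff (phi n a (b - 1)) k * (1 - 2 / real n * real k))"
proof (cases "k \<le> (n - 1) div 2")
  case True
  obtain j where j: "n = Suc j" using assms(1) by (cases n) auto
  have na: "real n + a > 0" using assms by simp
  have "pochhammer (a + 1) n = pochhammer (a + 1) j * (a + real n)"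
    unfolding j pochhammer_Suc by (simp add: algebra_simps)
  then have e1: "pochhammer (a + 1) j = pochhammer (a + 1) n / (a + real n)"
    using na by (simp add: divide_simps)
  have e2: "fact j = fact n / real n" unfolding j by simp
  have "(- real n) * pochhammer (- real j) (2*k) = pochhammer (- real n) (2*k) * (- real n + 2 * real k)"
    using pochhammer_shift[of "- real n" "2*k"] by (simp add: j)
  then have e3: "pochhammer (- real j) (2*k) = pochhammer (- real n) (2*k) * ((real n - 2 * real k) / real n)"
    using assms(1) by (simp add: divide_simps algebra_simps)
  have e4: "real j + a + b + 1 = real n + a + (b - 1) + 1" by (simp add: j)
  have rearrange: "A / (a + real n) / (F / real n) * (P * ((real n - 2 * real k) / real n) * B / PA) * Q
      = real n / (real n + a) * (A / F * (P * B / PA) * Q * (1 - 2 / real n * real k))"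
    if "F > 0" "PA > 0" for A F P B PA Q :: real
  proof -
    have "A / (a + real n) / (F / real n) = real n / (real n + a) * (A / F)"
      using that na by (simp add: divide_simps add.commute)
    moreover have "(real n - 2 * real k) / real n = 1 - 2 / real n * real k"
      using assms(1) by (simp add: diff_divide_distrib)
    ultimately show ?thesis
      by (simp only: mult_ac times_divide_eq_left times_divide_eq_right divide_divide_eq_left)
  qed
  have "k \<le> n div 2" using True by linarith
  have "coeff (phi (n - 1) a b) k = phi_coeff j a b k" using True j by (simp add: coeff_phi)
  also have "\<dots> = pochhammer (a + 1) n / (a + real n) / (fact n / real n) *
      (pochhammer (- real n) (2*k) * ((real n - 2 * real k) / real n)
        * pochhammer (real n + a + (b - 1) + 1) (2*k) / pochhammer (a + 1) (2*k)) * (1/4) ^ k"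
    by (simp only: phi_coeff_def e1 e2 e3 e4)
  also have "\<dots> = real n / (real n + a) * (phi_coeff n a (b - 1) k * (1 - 2 / real n * real k))"
    unfolding phi_coeff_def by (rule rearrange) (use assms in \<open>simp_all add: pochhammer_pos\<close>)
  also have "\<dots> = real n / (real n + a) * (coeff (phi n a (b - 1)) k * (1 - 2 / real n * real k))"
    using \<open>k \<le> n div 2\<close> by (simp add: coeff_phi)
  finally show ?thesis .
next
  case False
  then have "k > n div 2 \<or> 2 * k = n" by linarith
  then show ?thesis using False by (auto simp: coeff_phi)
qed

lemma phi_euler_pair:
  assumes "n \<ge> 2" "a > -1" "real n + a + b > 0"
  shows "euler_pair (phi n a (b - 1)) (n div 2) (2 / (real n + a + b)) (2 / real n) (real n / (real n + a))"
proof
  show "coeff (phi n a (b - 1)) k > 0" if "k \<le> n div 2" for k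
    using phi_coeff_pos[of a n "b - 1" k] that assms by (simp add: coeff_phi)
  show "2 / real n * real k < 1" if "k < n div 2" for k
  proof -
    have "2 * k < n" using that by presburger
    then have "2 * real k < real n" by linarith
    then show ?thesis using assms(1) by (simp add: field_simps)
  qed
  show "2 / real n * real (n div 2) \<le> 1"
  proof -
    have "2 * (n div 2) \<le> n" by presburger
    then have "2 * real (n div 2) \<le> real n" by linarith
    then show ?thesis using assms(1) by (simp add: field_simps)
  qed
qed (use assms in \<open>auto simp: coeff_phi\<close>)

theorem lemma2:
  fixes n :: nat and a b :: real
  assumes "n \<ge> 4" and "a > -1" and "real n + a + b > 0"
  shows "((neg_zeros (phi n a b) \<and> neg_zeros (phi (n - 1) a b) \<and>
           interlace_nonstrict (phi n a b) (phi (n - 1) a b))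
          \<longleftrightarrow> real_rooted (phi n a (b - 1)))
       \<and> ((neg_zeros (phi n a b) \<and> neg_zeros (phi (n - 1) a b) \<and>
           interlace_strict (phi n a b) (phi (n - 1) a b))
          \<longleftrightarrow> real_rooted (phi n a (b - 1)) \<and> rsquarefree (phi n a (b - 1)))
       \<and> (real_rooted (phi n a (b - 1)) \<longrightarrow> zr (phi (n - 1) a b) 1 \<le> zr (phi n a b) 1)"
proof -
  interpret euler_pair "phi n a (b - 1)" "n div 2" "2 / (real n + a + b)" "2 / real n" "real n / (real n + a)"
    using phi_euler_pair assms by simp
  have "phi n a b = g"
    by (intro poly_eqI) (simp add: coeff_g coeff_phi_b_minus_1[OF assms(3)])
  moreover have "phi (n - 1) a b = h"
    using coeff_phi_n_minus_1[of n a b] assms by (intro poly_eqI) (simp add: coeff_h)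
  ultimately show ?thesis
    using interlace_nonstrict_iff_real_rooted interlace_strict_iff_real_rooted_rsquarefree
      zr_1_h_le_zr_1_g by simp
qed

end
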